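(* Let $\Lambda=\Lambda_A\oplus\Lambda_B$, with $\Lambda_A=\mathrm{diag}(\lambda_x)_{x\in\mathsf X}$ and $\Lambda_B=\mathrm{diag}(\lambda_y)_{y\in\mathsf Y}$, be an optimal solution of the dual SDP of an XOR game with game matrix $\Phi$ and optimal quantum bias $\xi_q$. Assume $\lambda_x>0$ for all $x\in\mathsf X$, and put $F=\Lambda_A^{-1}\Phi$, i.e. $F_{xy}=\lambda_x^{-1}\Phi_{xy}$. Then for every quantum strategy $(\{A_x\},\{B_y\})$ the following operator identity holds: $$\xi_q\mathbb 1-\mathcal B_g=\sum_{x\in\mathsf X}\frac{\lambda_x}{2}\Big(A_x-\sum_{y}F_{xy}B_y\Big)^2+P(\{B_y\}_y),$$ where $$P(\{B_y\}_y)=\frac12\Big(\xi_q\mathbb 1-\sum_{x\in\mathsf X}\frac1{\lambda_x}\sum_{y,y'}\Phi_{xy}\Phi_{xy'}B_yB_{y'}\Big)$$ is a polynomial in Bob's observables only, and $P(\{B_y\}_y)\succeq 0$ for every choice of Hermitian $B_y$ with $B_y^2=\mathbb 1$.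
   Context: An XOR game consists of finite question sets $\mathsf X,\mathsf Y$, a probability distribution $q$ on $\mathsf X\times\mathsf Y$, and a function $f:\mathsf X\times\mathsf Y\to\{0,1\}$; the players win on questions $(x,y)$ with answers $a,b\in\{0,1\}$ iff $a\oplus b=f(x,y)$. Its game matrix is the real $|\mathsf X|\times|\mathsf Y|$ matrix $\Phi$ with entries $\Phi_{xy}=q(x,y)(-1)^{f(x,y)}$. A quantum strategy consists of a state $|\psi\rangle\in\mathcal H_A\otimes\mathcal H_B$ and Hermitian observables $A_x$ on $\mathcal H_A$, $B_y$ on $\mathcal H_B$ with $A_x^2=\mathbb 1$, $B_y^2=\mathbb 1$ (we write $A_x$ for $A_x\otimes\mathbb 1$ and $B_y$ for $\mathbb 1\otimes B_y$, so they commute). The game operator is $\mathcal B_g=\sum_{x,y}\Phi_{xy}A_x B_y$; the bias of the strategy is $\langle\psi|\mathcal B_g|\psi\rangle$, and the optimal quantum bias $\xi_q$ is the supremum of the bias over all quantum strategies (of any dimension). Let $\tilde\Phi=\frac12\begin{pmatrix}0&\Phi\\ \Phi^T&0\end{pmatrix}$. The dual SDP is: minimize $\mathrm{Tr}[\Lambda]/2$ over real diagonal $(|\mathsf X|+|\mathsf Y|)\times(|\mathsf X|+|\mathsf Y|)$ matrices $\Lambda$ subject to $\frac12\Lambda-\tilde\Phi\succeq0$; its optimal value equals $\xi_q$. *)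

theory Defs
  imports "Jordan_Normal_Form.Matrix"
begin

(* Finite-dimensional complex operators are represented as JNF matrices "complex mat";
   the dimension is a value, so strategies of arbitrary (finite) dimension can be quantified. *)

definition cinner :: "complex vec \<Rightarrow> complex vec \<Rightarrow> complex" where
  "cinner v w = (\<Sum>i<dim_vec v. cnj (v $ i) * w $ i)"

definition herm_mat :: "nat \<Rightarrow> complex mat \<Rightarrow> bool" where
  "herm_mat n A \<longleftrightarrow> A \<in> carrier_mat n n \<and> (\<forall>i<n. \<forall>j<n. A $$ (i,j) = cnj (A $$ (j,i)))"

definition obs_mat :: "nat \<Rightarrow> complex mat \<Rightarrow> bool" where
  "obs_mat n A \<longleftrightarrow> herm_mat n A \<and> A * A = 1\<^sub>m n"

definition psd_mat :: "nat \<Rightarrow> complex mat \<Rightarrow> bool" where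
  "psd_mat n A \<longleftrightarrow> herm_mat n A \<and>
     (\<forall>v\<in>carrier_vec n. Im (cinner v (A *\<^sub>v v)) = 0 \<and> 0 \<le> Re (cinner v (A *\<^sub>v v)))"

definition msum :: "nat \<Rightarrow> 'i set \<Rightarrow> ('i \<Rightarrow> complex mat) \<Rightarrow> complex mat" where
  "msum n S f = mat n n (\<lambda>ij. \<Sum>s\<in>S. f s $$ ij)"

definition kron :: "complex mat \<Rightarrow> complex mat \<Rightarrow> complex mat" where
  "kron A B = mat (dim_row A * dim_row B) (dim_col A * dim_col B)
     (\<lambda>(i,j). A $$ (i div dim_row B, j div dim_col B) * B $$ (i mod dim_row B, j mod dim_col B))"

definition lift_A :: "nat \<Rightarrow> nat \<Rightarrow> complex mat \<Rightarrow> complex mat" where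
  "lift_A dA dB A = kron A (1\<^sub>m dB)"

definition lift_B :: "nat \<Rightarrow> nat \<Rightarrow> complex mat \<Rightarrow> complex mat" where
  "lift_B dA dB B = kron (1\<^sub>m dA) B"

definition xor_distribution :: "('x::finite \<times> 'y::finite \<Rightarrow> real) \<Rightarrow> bool" where
  "xor_distribution q \<longleftrightarrow> (\<forall>xy. 0 \<le> q xy) \<and> (\<Sum>xy\<in>UNIV. q xy) = 1"

definition game_matrix :: "('x \<times> 'y \<Rightarrow> real) \<Rightarrow> ('x \<Rightarrow> 'y \<Rightarrow> bool) \<Rightarrow> 'x \<Rightarrow> 'y \<Rightarrow> real" where
  "game_matrix q f x y = q (x,y) * (-1) ^ (if f x y then 1 else 0)"

definition game_op :: "('x::finite \<Rightarrow> 'y::finite \<Rightarrow> real) \<Rightarrow> nat \<Rightarrow> ('x \<Rightarrow> complex mat)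
     \<Rightarrow> ('y \<Rightarrow> complex mat) \<Rightarrow> complex mat" where
  "game_op \<Phi> n A B = msum n UNIV (\<lambda>(x,y). of_real (\<Phi> x y) \<cdot>\<^sub>m (A x * B y))"

definition quantum_strategy :: "nat \<Rightarrow> nat \<Rightarrow> complex vec \<Rightarrow> ('x \<Rightarrow> complex mat)
     \<Rightarrow> ('y \<Rightarrow> complex mat) \<Rightarrow> bool" where
  "quantum_strategy dA dB \<psi> A B \<longleftrightarrow> 0 < dA \<and> 0 < dB \<and> \<psi> \<in> carrier_vec (dA * dB) \<and>
     cinner \<psi> \<psi> = 1 \<and> (\<forall>x. obs_mat dA (A x)) \<and> (\<forall>y. obs_mat dB (B y))"

definition quantum_bias :: "('x::finite \<Rightarrow> 'y::finite \<Rightarrow> real) \<Rightarrow> nat \<Rightarrow> nat \<Rightarrow> complex vec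
     \<Rightarrow> ('x \<Rightarrow> complex mat) \<Rightarrow> ('y \<Rightarrow> complex mat) \<Rightarrow> real" where
  "quantum_bias \<Phi> dA dB \<psi> A B =
     Re (cinner \<psi> (game_op \<Phi> (dA * dB) (\<lambda>x. lift_A dA dB (A x)) (\<lambda>y. lift_B dA dB (B y)) *\<^sub>v \<psi>))"

definition xi_q :: "('x::finite \<Rightarrow> 'y::finite \<Rightarrow> real) \<Rightarrow> real" where
  "xi_q \<Phi> = Sup {quantum_bias \<Phi> dA dB \<psi> A B | dA dB \<psi> A B. quantum_strategy dA dB \<psi> A B}"

definition tPhi :: "('x \<Rightarrow> 'y \<Rightarrow> real) \<Rightarrow> 'x + 'y \<Rightarrow> 'x + 'y \<Rightarrow> real" where
  "tPhi \<Phi> i j = (case (i, j) of (Inl x, Inr y) \<Rightarrow> \<Phi> x y / 2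
                               | (Inr y, Inl x) \<Rightarrow> \<Phi> x y / 2
                               | _ \<Rightarrow> 0)"

text \<open>Diagonal matrix Lambda represented by its diagonal lam; feasibility: Lambda/2 - tPhi is PSD.\<close>
definition dual_feasible :: "('x::finite \<Rightarrow> 'y::finite \<Rightarrow> real) \<Rightarrow> ('x + 'y \<Rightarrow> real) \<Rightarrow> bool" where
  "dual_feasible \<Phi> lam \<longleftrightarrow>
     (\<forall>v :: 'x + 'y \<Rightarrow> real. 0 \<le> (\<Sum>i\<in>UNIV. \<Sum>j\<in>UNIV.
          v i * ((if i = j then lam i / 2 else 0) - tPhi \<Phi> i j) * v j))"

definition dual_obj :: "('x::finite + 'y::finite \<Rightarrow> real) \<Rightarrow> real" where
  "dual_obj lam = (\<Sum>i\<in>UNIV. lam i) / 2"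

definition dual_optimal :: "('x::finite \<Rightarrow> 'y::finite \<Rightarrow> real) \<Rightarrow> ('x + 'y \<Rightarrow> real) \<Rightarrow> bool" where
  "dual_optimal \<Phi> lam \<longleftrightarrow> dual_feasible \<Phi> lam \<and>
     (\<forall>lam'. dual_feasible \<Phi> lam' \<longrightarrow> dual_obj lam \<le> dual_obj lam')"

definition Pop :: "('x::finite \<Rightarrow> 'y::finite \<Rightarrow> real) \<Rightarrow> ('x + 'y \<Rightarrow> real) \<Rightarrow> real \<Rightarrow> nat
     \<Rightarrow> ('y \<Rightarrow> complex mat) \<Rightarrow> complex mat" where
  "Pop \<Phi> lam \<xi> n B = (1/2 :: complex) \<cdot>\<^sub>m
     (of_real \<xi> \<cdot>\<^sub>m 1\<^sub>m n -
      msum n UNIV (\<lambda>x. of_real (1 / lam (Inl x)) \<cdot>\<^sub>m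
        msum n UNIV (\<lambda>(y, y'). of_real (\<Phi> x y * \<Phi> x y') \<cdot>\<^sub>m (B y * B y'))))"

end

theory Submission
  imports Defs "HOL-Analysis.Analysis"
begin

text \<open>Expanding the squares shows that the identity holds for any commuting \<open>A\<^sub>x\<close>, \<open>B\<^sub>y\<close> with
  \<open>A\<^sub>x\<^sup>2 = 1\<close> once \<open>\<xi>\<^sub>q\<close> is replaced by \<open>\<Sum>\<^sub>x \<lambda>\<^sub>x\<close>, so the content is \<open>\<xi>\<^sub>q = \<Sum>\<^sub>x \<lambda>\<^sub>x\<close> and \<open>P \<succeq> 0\<close>.
  Rescaling \<open>\<Lambda>\<^sub>A \<mapsto> t \<Lambda>\<^sub>A\<close>, \<open>\<Lambda>\<^sub>B \<mapsto> \<Lambda>\<^sub>B / t\<close> preserves feasibility, so optimality forces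
  \<open>\<Sum>\<^sub>x \<lambda>\<^sub>x = \<Sum>\<^sub>y \<lambda>\<^sub>y\<close>, and both equal the dual value. The dual value equals \<open>\<xi>\<^sub>q\<close>: feasibility
  bounds every bias through the vectors \<open>A\<^sub>x \<psi>\<close>, \<open>B\<^sub>y \<psi>\<close>; conversely, if all biases stayed below
  the dual value, separating a suitable point from the compact convex hull of the moment vectors
  of unit vectors would yield a better dual solution, because Tsirelson's construction turns every
  family of unit vectors into a quantum strategy with the same bias. Finally \<open>P \<succeq> 0\<close> is the Schur
  complement of feasibility: minimising the dual form over Alice's coordinates gives
  \<open>\<Sum>\<^sub>x (\<Sum>\<^sub>y \<Phi>\<^sub>x\<^sub>y r\<^sub>y)\<^sup>2 / \<lambda>\<^sub>x \<le> \<Sum>\<^sub>y \<lambda>\<^sub>y r\<^sub>y\<^sup>2\<close>, applied coordinatewise to the vectors \<open>B\<^sub>y v\<close>.\<close>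

section \<open>Kronecker products\<close>

lemma sum_lessThan_mult_nat:
  fixes a b :: nat
  shows "(\<Sum>k<a*b. f k) = (\<Sum>p<a. \<Sum>q<b. f (p*b+q))"
proof (induction a)
  case (Suc a)
  have "(\<Sum>k<Suc a*b. f k) = (\<Sum>k<a*b. f k) + (\<Sum>k=a*b..<a*b+b. f k)"
    using sum.atLeastLessThan_concat[of 0 "a*b" "a*b+b" f] by (simp add: atLeast0LessThan add.commute)
  also have "(\<Sum>k=a*b..<a*b+b. f k) = (\<Sum>q<b. f (a*b+q))"
    using sum.shift_bounds_nat_ivl[of f 0 "a*b" b] by (simp add: atLeast0LessThan add.commute)
  finally show ?case using Suc by simp
qed simp

lemma mult_index_less: "p < (a::nat) \<Longrightarrow> q < b \<Longrightarrow> p*b+q < a*b"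
proof -
  assume p: "p < a" and q: "q < b"
  have "p*b+q < (p+1)*b" using q by simp
  also have "\<dots> \<le> a*b" using p by (intro mult_le_mono1) simp
  finally show ?thesis .
qed

lemma div_mod_less_mult:
  assumes "i < a * (b::nat)"
  shows "i div b < a" "i mod b < b"
proof -
  have "0 < b" using assms by (cases "b = 0") auto
  then show "i div b < a" "i mod b < b" using assms by (simp_all add: less_mult_imp_div_less)
qed

lemma kron_dims[simp]:
  "dim_row (kron A B) = dim_row A * dim_row B" "dim_col (kron A B) = dim_col A * dim_col B"
  by (simp_all add: kron_def)

lemma kron_index[simp]:
  "i < dim_row A * dim_row B \<Longrightarrow> j < dim_col A * dim_col B \<Longrightarrow>
   kron A B $$ (i,j) = A $$ (i div dim_row B, j div dim_col B) * B $$ (i mod dim_row B, j mod dim_col B)"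
  unfolding kron_def by (subst index_mat) auto

lemma kron_carrier:
  "A \<in> carrier_mat a a' \<Longrightarrow> B \<in> carrier_mat b b' \<Longrightarrow> kron A B \<in> carrier_mat (a*b) (a'*b')"
  by (intro carrier_matI) (auto dest!: carrier_matD)

lemma kron_mult:
  assumes A: "A \<in> carrier_mat a a'" and C: "C \<in> carrier_mat a' a''"
    and B: "B \<in> carrier_mat b b'" and D: "D \<in> carrier_mat b' b''"
  shows "kron A B * kron C D = kron (A*C) (B*D)"
proof (rule eq_matI)
  fix i j assume "i < dim_row (kron (A*C) (B*D))" and "j < dim_col (kron (A*C) (B*D))"
  then have i: "i < a*b" and j: "j < a''*b''" using A B C D by auto
  have "(kron A B * kron C D) $$ (i,j) = (\<Sum>k<a'*b'. kron A B $$ (i,k) * kron C D $$ (k,j))"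
    using i j A B C D by (simp add: scalar_prod_def atLeast0LessThan)
  also have "\<dots> = (\<Sum>p<a'. \<Sum>q<b'. kron A B $$ (i,p*b'+q) * kron C D $$ (p*b'+q,j))"
    by (rule sum_lessThan_mult_nat)
  also have "\<dots> = (\<Sum>p<a'. \<Sum>q<b'. (A $$ (i div b, p) * C $$ (p, j div b''))
                                    * (B $$ (i mod b, q) * D $$ (q, j mod b'')))"
    using i j A B C D by (intro sum.cong refl) (simp add: mult_index_less)
  also have "\<dots> = (\<Sum>p<a'. A $$ (i div b, p) * C $$ (p, j div b''))
                 * (\<Sum>q<b'. B $$ (i mod b, q) * D $$ (q, j mod b''))"
    by (simp add: sum_product)
  also have "\<dots> = kron (A*C) (B*D) $$ (i,j)"
    using i j A B C D div_mod_less_mult[OF i] div_mod_less_mult[OF j]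
    by (simp add: scalar_prod_def atLeast0LessThan)
  finally show "(kron A B * kron C D) $$ (i,j) = kron (A*C) (B*D) $$ (i,j)" .
qed (use A B C D in auto)

lemma kron_one: "kron (1\<^sub>m a) (1\<^sub>m b) = (1\<^sub>m (a*b) :: complex mat)"
proof (rule eq_matI)
  fix i j assume "i < dim_row (1\<^sub>m (a*b) :: complex mat)" "j < dim_col (1\<^sub>m (a*b) :: complex mat)"
  then have i: "i < a*b" and j: "j < a*b" by auto
  have "(i div b = j div b \<and> i mod b = j mod b) = (i = j)"
    by (metis div_mult_mod_eq)
  then show "kron (1\<^sub>m a) (1\<^sub>m b) $$ (i,j) = (1\<^sub>m (a*b) :: complex mat) $$ (i,j)"
    using i j div_mod_less_mult[OF i] div_mod_less_mult[OF j] by auto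
qed auto

lemma herm_mat_kron: "herm_mat a A \<Longrightarrow> herm_mat b B \<Longrightarrow> herm_mat (a*b) (kron A B)"
  unfolding herm_mat_def
proof (intro conjI allI impI)
  assume A: "A \<in> carrier_mat a a \<and> (\<forall>i<a. \<forall>j<a. A $$ (i, j) = cnj (A $$ (j, i)))"
     and B: "B \<in> carrier_mat b b \<and> (\<forall>i<b. \<forall>j<b. B $$ (i, j) = cnj (B $$ (j, i)))"
  show "kron A B \<in> carrier_mat (a*b) (a*b)" using A B by (intro kron_carrier) auto
  fix i j assume i: "i < a*b" and j: "j < a*b"
  have dims: "dim_row A = a" "dim_col A = a" "dim_row B = b" "dim_col B = b" using A B by auto
  have "A $$ (i div b, j div b) = cnj (A $$ (j div b, i div b))"
    using A div_mod_less_mult[OF i] div_mod_less_mult[OF j] by blast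
  moreover have "B $$ (i mod b, j mod b) = cnj (B $$ (j mod b, i mod b))"
    using B div_mod_less_mult[OF i] div_mod_less_mult[OF j] by blast
  ultimately show "kron A B $$ (i, j) = cnj (kron A B $$ (j, i))"
    using i j by (simp only: kron_index dims) simp
qed

lemma herm_mat_one: "herm_mat n (1\<^sub>m n)"
  unfolding herm_mat_def by auto

lemma obs_mat_kron:
  assumes "obs_mat a A" "obs_mat b B"
  shows "obs_mat (a*b) (kron A B)"
proof -
  have "A \<in> carrier_mat a a" "B \<in> carrier_mat b b"
    using assms unfolding obs_mat_def herm_mat_def by auto
  then show ?thesis
    using assms kron_mult[of A a a A a B b b B b] unfolding obs_mat_def
    by (auto intro: herm_mat_kron simp: kron_one)
qed

lemma obs_mat_one: "obs_mat n (1\<^sub>m n)"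
  unfolding obs_mat_def by (simp add: herm_mat_one)

lemma lift_A_carrier: "A \<in> carrier_mat dA dA \<Longrightarrow> lift_A dA dB A \<in> carrier_mat (dA*dB) (dA*dB)"
  unfolding lift_A_def by (rule kron_carrier) auto

lemma lift_B_carrier: "B \<in> carrier_mat dB dB \<Longrightarrow> lift_B dA dB B \<in> carrier_mat (dA*dB) (dA*dB)"
  unfolding lift_B_def by (rule kron_carrier) auto

lemma obs_mat_lift_A: "obs_mat dA A \<Longrightarrow> obs_mat (dA*dB) (lift_A dA dB A)"
  unfolding lift_A_def by (rule obs_mat_kron[OF _ obs_mat_one])

lemma obs_mat_lift_B: "obs_mat dB B \<Longrightarrow> obs_mat (dA*dB) (lift_B dA dB B)"
  unfolding lift_B_def by (rule obs_mat_kron[OF obs_mat_one])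

lemma lift_A_mult_lift_B:
  assumes "A \<in> carrier_mat dA dA" "B \<in> carrier_mat dB dB"
  shows "lift_A dA dB A * lift_B dA dB B = kron A B"
    and "lift_B dA dB B * lift_A dA dB A = kron A B"
  using assms unfolding lift_A_def lift_B_def
  by (subst kron_mult[where a=dA and a'=dA and a''=dA and b=dB and b'=dB and b''=dB], auto)+

section \<open>Sesquilinear forms\<close>

lemma msum_carrier[simp]: "msum n S f \<in> carrier_mat n n"
  by (simp add: msum_def)

lemma msum_dims[simp]: "dim_row (msum n S f) = n" "dim_col (msum n S f) = n"
  by (simp_all add: msum_def)

lemma msum_index[simp]: "i < n \<Longrightarrow> j < n \<Longrightarrow> msum n S f $$ (i,j) = (\<Sum>s\<in>S. f s $$ (i,j))"
  by (simp add: msum_def)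

lemma sum_UNIV_prod_case:
  "(\<Sum>p\<in>(UNIV :: ('a::finite \<times> 'b::finite) set). case p of (a, b) \<Rightarrow> f a b)
   = (\<Sum>a\<in>UNIV. \<Sum>b\<in>UNIV. f a b)"
  by (simp add: sum.cartesian_product UNIV_Times_UNIV[symmetric] del: UNIV_Times_UNIV)

lemma index_mult_mat_square:
  "X \<in> carrier_mat n n \<Longrightarrow> Y \<in> carrier_mat n n \<Longrightarrow> i < n \<Longrightarrow> j < n \<Longrightarrow>
   (X * Y) $$ (i,j) = (\<Sum>k<n. X $$ (i,k) * Y $$ (k,j))"
  by (simp add: scalar_prod_def atLeast0LessThan)

lemma cinner_mult_mat_vec:
  "M \<in> carrier_mat n n \<Longrightarrow> v \<in> carrier_vec n \<Longrightarrow> w \<in> carrier_vec n \<Longrightarrow>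
   cinner w (M *\<^sub>v v) = (\<Sum>i<n. \<Sum>j<n. cnj (w$i) * M$$(i,j) * v$j)"
  unfolding cinner_def by (simp add: scalar_prod_def atLeast0LessThan sum_distrib_left mult.assoc)

lemma cinner_msum:
  assumes "finite S" "\<And>s. s \<in> S \<Longrightarrow> f s \<in> carrier_mat n n"
    and "v \<in> carrier_vec n" "w \<in> carrier_vec n"
  shows "cinner w (msum n S f *\<^sub>v v) = (\<Sum>s\<in>S. cinner w (f s *\<^sub>v v))"
proof -
  have "cinner w (msum n S f *\<^sub>v v) = (\<Sum>i<n. \<Sum>j<n. cnj (w$i) * msum n S f$$(i,j) * v$j)"
    using assms by (intro cinner_mult_mat_vec) auto
  also have "\<dots> = (\<Sum>i<n. \<Sum>j<n. \<Sum>s\<in>S. cnj (w$i) * f s$$(i,j) * v$j)"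
    by (simp add: sum_distrib_left sum_distrib_right)
  also have "\<dots> = (\<Sum>s\<in>S. \<Sum>i<n. \<Sum>j<n. cnj (w$i) * f s$$(i,j) * v$j)"
    by (simp only: sum.swap[where B=S and A="{..<n}"])
  also have "\<dots> = (\<Sum>s\<in>S. cinner w (f s *\<^sub>v v))"
  proof (rule sum.cong[OF refl])
    fix s assume "s \<in> S"
    then show "(\<Sum>i<n. \<Sum>j<n. cnj (w$i) * f s$$(i,j) * v$j) = cinner w (f s *\<^sub>v v)"
      using assms(2-4) cinner_mult_mat_vec[of "f s" n v w] by simp
  qed
  finally show ?thesis .
qed

lemma cinner_smult_mat:
  assumes "M \<in> carrier_mat n n" "v \<in> carrier_vec n" "w \<in> carrier_vec n"
  shows "cinner w ((c \<cdot>\<^sub>m M) *\<^sub>v v) = c * cinner w (M *\<^sub>v v)"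
proof -
  have "cinner w ((c \<cdot>\<^sub>m M) *\<^sub>v v) = (\<Sum>i<n. \<Sum>j<n. cnj (w$i) * (c \<cdot>\<^sub>m M)$$(i,j) * v$j)"
    using assms by (intro cinner_mult_mat_vec) auto
  also have "\<dots> = (\<Sum>i<n. \<Sum>j<n. c * (cnj (w$i) * M$$(i,j) * v$j))"
    using assms by (intro sum.cong refl) auto
  also have "\<dots> = c * cinner w (M *\<^sub>v v)"
    using assms by (simp add: cinner_mult_mat_vec sum_distrib_left)
  finally show ?thesis .
qed

lemma cinner_minus_mat:
  assumes A: "A \<in> carrier_mat n n" and B: "B \<in> carrier_mat n n"
    and v: "v \<in> carrier_vec n" and w: "w \<in> carrier_vec n"
  shows "cinner w ((A - B) *\<^sub>v v) = cinner w (A *\<^sub>v v) - cinner w (B *\<^sub>v v)"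
proof -
  have AB: "A - B \<in> carrier_mat n n" using A B by (metis minus_carrier_mat)
  have "(\<Sum>i<n. \<Sum>j<n. cnj (w$i) * (A - B)$$(i,j) * v$j)
      = (\<Sum>i<n. \<Sum>j<n. cnj (w$i) * A$$(i,j) * v$j - cnj (w$i) * B$$(i,j) * v$j)"
    using A B by (intro sum.cong refl) (simp add: algebra_simps)
  then show ?thesis
    unfolding cinner_mult_mat_vec[OF AB v w] cinner_mult_mat_vec[OF A v w] cinner_mult_mat_vec[OF B v w]
    by (simp add: sum_subtractf)
qed

lemma Re_cinner:
  "dim_vec p = n \<Longrightarrow> Re (cinner p q) = (\<Sum>k<n. Re (p$k) * Re (q$k) + Im (p$k) * Im (q$k))"
  unfolding cinner_def by simp

lemma cinner_herm_mat:
  assumes "herm_mat n M" "v \<in> carrier_vec n" "w \<in> carrier_vec n"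
  shows "cinner w (M *\<^sub>v v) = cinner (M *\<^sub>v w) v"
proof -
  have M: "M \<in> carrier_mat n n" using assms herm_mat_def by auto
  have "cinner (M *\<^sub>v w) v = (\<Sum>i<n. cnj (\<Sum>j<n. M$$(i,j) * w$j) * v$i)"
    using M assms unfolding cinner_def by (simp add: scalar_prod_def atLeast0LessThan)
  also have "\<dots> = (\<Sum>i<n. \<Sum>j<n. cnj (w$j) * M$$(j,i) * v$i)"
  proof (rule sum.cong[OF refl])
    fix i assume i: "i \<in> {..<n}"
    have "cnj (\<Sum>j<n. M$$(i,j) * w$j) * v$i = (\<Sum>j<n. cnj (M$$(i,j)) * cnj (w$j) * v$i)"
      by (simp add: sum_distrib_right)
    also have "\<dots> = (\<Sum>j<n. cnj (w$j) * M$$(j,i) * v$i)"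
    proof (rule sum.cong[OF refl])
      fix j assume j: "j \<in> {..<n}"
      have "M$$(j,i) = cnj (M$$(i,j))" using assms(1) i j unfolding herm_mat_def by blast
      then show "cnj (M$$(i,j)) * cnj (w$j) * v$i = cnj (w$j) * M$$(j,i) * v$i" by simp
    qed
    finally show "cnj (\<Sum>j<n. M$$(i,j) * w$j) * v$i = (\<Sum>j<n. cnj (w$j) * M$$(j,i) * v$i)" .
  qed
  also have "\<dots> = cinner w (M *\<^sub>v v)"
    unfolding cinner_mult_mat_vec[OF M assms(2,3)] by (rule sum.swap)
  finally show ?thesis by simp
qed

lemma Im_cinner_herm_mat:
  assumes "herm_mat n M" "v \<in> carrier_vec n"
  shows "Im (cinner v (M *\<^sub>v v)) = 0"
proof -
  have M: "M \<in> carrier_mat n n" using assms herm_mat_def by auto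
  have "cnj (cinner v (M *\<^sub>v v)) = (\<Sum>i<n. \<Sum>j<n. v$i * cnj (M$$(i,j)) * cnj (v$j))"
    using M assms by (simp add: cinner_mult_mat_vec)
  also have "\<dots> = (\<Sum>i<n. \<Sum>j<n. cnj (v$j) * M$$(j,i) * v$i)"
  proof (intro sum.cong refl)
    fix i j assume i: "i \<in> {..<n}" and j: "j \<in> {..<n}"
    have "M$$(j,i) = cnj (M$$(i,j))" using assms(1) i j unfolding herm_mat_def by blast
    then show "v$i * cnj (M$$(i,j)) * cnj (v$j) = cnj (v$j) * M$$(j,i) * v$i" by simp
  qed
  also have "\<dots> = cinner v (M *\<^sub>v v)"
    unfolding cinner_mult_mat_vec[OF M assms(2,2)] by (rule sum.swap)
  finally have "cnj (cinner v (M *\<^sub>v v)) = cinner v (M *\<^sub>v v)" .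
  then show ?thesis by (metis Im_complex_of_real Reals_cnj_iff complex_is_Real_iff)
qed

lemma cinner_obs_mat:
  assumes "obs_mat n M" "v \<in> carrier_vec n"
  shows "cinner (M *\<^sub>v v) (M *\<^sub>v v) = cinner v v"
proof -
  have H: "herm_mat n M" and MM: "M * M = 1\<^sub>m n"
    using assms(1) unfolding obs_mat_def by auto
  have M: "M \<in> carrier_mat n n" using H herm_mat_def by auto
  have "cinner (M *\<^sub>v v) (M *\<^sub>v v) = cinner v (M *\<^sub>v (M *\<^sub>v v))"
    using cinner_herm_mat[OF H, of "M *\<^sub>v v" v] M assms(2) by simp
  also have "M *\<^sub>v (M *\<^sub>v v) = v"
    using M assms(2) MM by (metis assoc_mult_mat_vec one_mult_mat_vec)
  finally show ?thesis .
qed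

section \<open>The dual SDP as a quadratic form\<close>

lemma sum_UNIV_Plus:
  "(\<Sum>i\<in>(UNIV :: ('a::finite + 'b::finite) set). g i) = (\<Sum>x\<in>UNIV. g (Inl x)) + (\<Sum>y\<in>UNIV. g (Inr y))"
proof -
  have "(\<Sum>i\<in>(UNIV :: ('a + 'b) set). g i) = sum g (UNIV <+> UNIV)" by (simp only: UNIV_Plus_UNIV)
  also have "\<dots> = sum (g \<circ> Inl) UNIV + sum (g \<circ> Inr) UNIV" by (rule sum.Plus) simp_all
  finally show ?thesis by simp
qed

definition dual_form :: "('x::finite \<Rightarrow> 'y::finite \<Rightarrow> real) \<Rightarrow> ('x + 'y \<Rightarrow> real)
    \<Rightarrow> ('x \<Rightarrow> real) \<Rightarrow> ('y \<Rightarrow> real) \<Rightarrow> real" where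
  "dual_form \<Phi> lam a b = (\<Sum>x\<in>UNIV. lam (Inl x) / 2 * (a x)^2) + (\<Sum>y\<in>UNIV. lam (Inr y) / 2 * (b y)^2)
     - (\<Sum>x\<in>UNIV. \<Sum>y\<in>UNIV. \<Phi> x y * a x * b y)"

lemma dual_form_eq:
  fixes \<Phi> :: "'x::finite \<Rightarrow> 'y::finite \<Rightarrow> real"
  shows "(\<Sum>i\<in>UNIV. \<Sum>j\<in>UNIV. v i * ((if i = j then lam i / 2 else 0) - tPhi \<Phi> i j) * v j)
    = dual_form \<Phi> lam (\<lambda>x. v (Inl x)) (\<lambda>y. v (Inr y))"
proof -
  have "(\<Sum>i\<in>UNIV. \<Sum>j\<in>UNIV. v i * ((if i = j then lam i / 2 else 0) - tPhi \<Phi> i j) * v j)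
     = (\<Sum>i\<in>UNIV. \<Sum>j\<in>UNIV. (if i = j then lam i / 2 * (v i)^2 else 0) - v i * tPhi \<Phi> i j * v j)"
    by (intro sum.cong refl) (auto simp: power2_eq_square algebra_simps)
  also have "\<dots> = (\<Sum>i\<in>UNIV. lam i / 2 * (v i)^2) - (\<Sum>i\<in>UNIV. \<Sum>j\<in>UNIV. v i * tPhi \<Phi> i j * v j)"
    by (simp add: sum_subtractf)
  also have "(\<Sum>i\<in>UNIV. lam i / 2 * (v i)^2)
      = (\<Sum>x\<in>UNIV. lam (Inl x) / 2 * (v (Inl x))^2) + (\<Sum>y\<in>UNIV. lam (Inr y) / 2 * (v (Inr y))^2)"
    by (rule sum_UNIV_Plus)
  also have "(\<Sum>i\<in>UNIV. \<Sum>j\<in>UNIV. v i * tPhi \<Phi> i j * v j) =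
      (\<Sum>x\<in>UNIV. \<Sum>y\<in>UNIV. v (Inl x) * (\<Phi> x y / 2) * v (Inr y))
      + (\<Sum>y\<in>UNIV. \<Sum>x\<in>UNIV. v (Inr y) * (\<Phi> x y / 2) * v (Inl x))"
    by (simp add: sum_UNIV_Plus tPhi_def)
  also have "(\<Sum>y\<in>UNIV. \<Sum>x\<in>UNIV. v (Inr y) * (\<Phi> x y / 2) * v (Inl x))
      = (\<Sum>x\<in>UNIV. \<Sum>y\<in>UNIV. v (Inl x) * (\<Phi> x y / 2) * v (Inr y))"
    by (subst sum.swap) (simp add: mult_ac)
  also have "(\<Sum>x\<in>UNIV. \<Sum>y\<in>UNIV. v (Inl x) * (\<Phi> x y / 2) * v (Inr y))
      + (\<Sum>x\<in>UNIV. \<Sum>y\<in>UNIV. v (Inl x) * (\<Phi> x y / 2) * v (Inr y))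
     = (\<Sum>x\<in>UNIV. \<Sum>y\<in>UNIV. \<Phi> x y * v (Inl x) * v (Inr y))"
    by (simp add: sum.distrib[symmetric] mult_ac)
  finally show ?thesis unfolding dual_form_def by simp
qed

lemma dual_feasible_iff: "dual_feasible \<Phi> lam \<longleftrightarrow> (\<forall>a b. 0 \<le> dual_form \<Phi> lam a b)"
proof
  assume F: "dual_feasible \<Phi> lam"
  show "\<forall>a b. 0 \<le> dual_form \<Phi> lam a b"
  proof (intro allI)
    fix a b
    have "0 \<le> (\<Sum>i\<in>UNIV. \<Sum>j\<in>UNIV. case_sum a b i * ((if i = j then lam i / 2 else 0) - tPhi \<Phi> i j) * case_sum a b j)"
      using F unfolding dual_feasible_def by blast
    then show "0 \<le> dual_form \<Phi> lam a b" unfolding dual_form_eq by simp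
  qed
qed (unfold dual_feasible_def dual_form_eq, blast)

lemma dual_obj_split: "dual_obj lam = ((\<Sum>x\<in>UNIV. lam (Inl x)) + (\<Sum>y\<in>UNIV. lam (Inr y))) / 2"
  unfolding dual_obj_def by (simp add: sum_UNIV_Plus)

lemma dual_feasible_cinner_bound:
  fixes \<Phi> :: "'x::finite \<Rightarrow> 'y::finite \<Rightarrow> real"
  assumes F: "dual_feasible \<Phi> lam" and p: "\<And>x. dim_vec (p x) = n" and q: "\<And>y. dim_vec (q y) = n"
  shows "(\<Sum>x\<in>UNIV. \<Sum>y\<in>UNIV. \<Phi> x y * Re (cinner (p x) (q y))) \<le>
     (\<Sum>x\<in>UNIV. lam (Inl x) / 2 * Re (cinner (p x) (p x)))
     + (\<Sum>y\<in>UNIV. lam (Inr y) / 2 * Re (cinner (q y) (q y)))"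
proof -
  have Q: "\<And>a b. 0 \<le> dual_form \<Phi> lam a b" using F dual_feasible_iff by blast
  define ra where "ra k x = Re (p x $ k)" for k x
  define ia where "ia k x = Im (p x $ k)" for k x
  define rb where "rb k y = Re (q y $ k)" for k y
  define ib where "ib k y = Im (q y $ k)" for k y
  have "0 \<le> (\<Sum>k<n. dual_form \<Phi> lam (ra k) (rb k) + dual_form \<Phi> lam (ia k) (ib k))"
    using Q by (intro sum_nonneg add_nonneg_nonneg) auto
  also have "\<dots> = (\<Sum>x\<in>UNIV. lam (Inl x) / 2 * Re (cinner (p x) (p x)))
     + (\<Sum>y\<in>UNIV. lam (Inr y) / 2 * Re (cinner (q y) (q y)))
     - (\<Sum>x\<in>UNIV. \<Sum>y\<in>UNIV. \<Phi> x y * Re (cinner (p x) (q y)))"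
    unfolding dual_form_def Re_cinner[OF p] Re_cinner[OF q] ra_def ia_def rb_def ib_def
    by (simp add: sum.distrib sum_subtractf sum_distrib_left sum.swap[where B="{..<n}"]
        algebra_simps power2_eq_square)
  finally show ?thesis by simp
qed

text \<open>The Schur complement of the positive block \<open>\<Lambda>\<^sub>A/2\<close>: minimise the form over \<open>a\<close>,
  attained at \<open>a x = (\<Sum>y. \<Phi> x y * r y) / \<lambda>\<^sub>x\<close>.\<close>

lemma dual_feasible_Schur:
  fixes \<Phi> :: "'x::finite \<Rightarrow> 'y::finite \<Rightarrow> real"
  assumes F: "dual_feasible \<Phi> lam" and pos: "\<And>x. 0 < lam (Inl x)"
  shows "(\<Sum>x\<in>UNIV. (\<Sum>y\<in>UNIV. \<Phi> x y * r y)^2 / lam (Inl x)) \<le> (\<Sum>y\<in>UNIV. lam (Inr y) * (r y)^2)"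
proof -
  define s where "s x = (\<Sum>y\<in>UNIV. \<Phi> x y * r y)" for x
  define a where "a x = s x / lam (Inl x)" for x
  have "0 \<le> dual_form \<Phi> lam a r" using F dual_feasible_iff by blast
  moreover have "(\<Sum>x\<in>UNIV. lam (Inl x) / 2 * (a x)^2) = (\<Sum>x\<in>UNIV. (s x)^2 / lam (Inl x)) / 2"
    unfolding a_def sum_divide_distrib
    by (intro sum.cong refl) (use pos in \<open>simp add: power2_eq_square field_simps\<close>)
  moreover have "(\<Sum>x\<in>UNIV. \<Sum>y\<in>UNIV. \<Phi> x y * a x * r y) = (\<Sum>x\<in>UNIV. (s x)^2 / lam (Inl x))"
  proof (intro sum.cong refl)
    fix x
    have "(\<Sum>y\<in>UNIV. \<Phi> x y * a x * r y) = a x * s x"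
      unfolding s_def by (simp add: sum_distrib_left mult_ac)
    then show "(\<Sum>y\<in>UNIV. \<Phi> x y * a x * r y) = (s x)^2 / lam (Inl x)"
      unfolding a_def by (simp add: power2_eq_square)
  qed
  moreover have "(\<Sum>y\<in>UNIV. lam (Inr y) / 2 * (r y)^2) = (\<Sum>y\<in>UNIV. lam (Inr y) * (r y)^2) / 2"
    by (simp add: sum_divide_distrib)
  ultimately show ?thesis unfolding dual_form_def s_def by linarith
qed

lemma dual_feasible_Inr_nonneg:
  assumes "dual_feasible \<Phi> lam"
  shows "0 \<le> lam (Inr y)"
proof -
  have "0 \<le> dual_form \<Phi> lam (\<lambda>_. 0) (\<lambda>y'. if y' = y then 1 else 0)"
    using assms dual_feasible_iff by blast
  also have "dual_form \<Phi> lam (\<lambda>_. 0) (\<lambda>y'. if y' = y then 1 else 0) = lam (Inr y) / 2"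
  proof -
    have "(\<Sum>y'\<in>UNIV. lam (Inr y') / 2 * (if y' = y then 1 else 0)^2) = lam (Inr y) / 2"
      by (subst sum.cong[OF refl, where h="\<lambda>y'. if y' = y then lam (Inr y) / 2 else 0"]) auto
    then show ?thesis unfolding dual_form_def by simp
  qed
  finally show ?thesis by simp
qed

definition rescale_dual :: "real \<Rightarrow> ('x + 'y \<Rightarrow> real) \<Rightarrow> 'x + 'y \<Rightarrow> real" where
  "rescale_dual t lam i = (case i of Inl x \<Rightarrow> t * lam (Inl x) | Inr y \<Rightarrow> lam (Inr y) / t)"

lemma dual_form_rescale:
  assumes "0 < t"
  shows "dual_form \<Phi> (rescale_dual t lam) a b = dual_form \<Phi> lam (\<lambda>x. sqrt t * a x) (\<lambda>y. b y / sqrt t)"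
proof -
  have "(\<Sum>x\<in>UNIV. lam (Inl x) / 2 * (sqrt t * a x)^2) = (\<Sum>x\<in>UNIV. t * lam (Inl x) / 2 * (a x)^2)"
    using assms by (intro sum.cong refl) (simp add: power_mult_distrib mult_ac)
  moreover have "(\<Sum>y\<in>UNIV. lam (Inr y) / 2 * (b y / sqrt t)^2) = (\<Sum>y\<in>UNIV. lam (Inr y) / t / 2 * (b y)^2)"
    using assms by (intro sum.cong refl) (simp add: power_divide)
  moreover have "(\<Sum>x\<in>UNIV. \<Sum>y\<in>UNIV. \<Phi> x y * (sqrt t * a x) * (b y / sqrt t))
      = (\<Sum>x\<in>UNIV. \<Sum>y\<in>UNIV. \<Phi> x y * a x * b y)"
    using assms by (intro sum.cong refl) (simp add: field_simps)
  ultimately show ?thesis unfolding dual_form_def rescale_dual_def by simp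
qed

lemma dual_feasible_rescale:
  "dual_feasible \<Phi> lam \<Longrightarrow> 0 < t \<Longrightarrow> dual_feasible \<Phi> (rescale_dual t lam)"
  unfolding dual_feasible_iff by (simp add: dual_form_rescale)

lemma dual_optimal_balanced:
  fixes \<Phi> :: "'x::finite \<Rightarrow> 'y::finite \<Rightarrow> real"
  assumes O: "dual_optimal \<Phi> lam" and pos: "\<And>x. 0 < lam (Inl x)"
  shows "(\<Sum>x\<in>UNIV. lam (Inl x)) = (\<Sum>y\<in>UNIV. lam (Inr y))"
proof -
  have F: "dual_feasible \<Phi> lam" using O dual_optimal_def by blast
  define A where "A = (\<Sum>x\<in>UNIV. lam (Inl x))"
  define B where "B = (\<Sum>y\<in>UNIV. lam (Inr y))"
  have Apos: "0 < A" unfolding A_def using pos by (intro sum_pos) auto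
  have Bnn: "0 \<le> B" unfolding B_def using dual_feasible_Inr_nonneg[OF F] by (intro sum_nonneg) auto
  define t where "t = (A + B) / (2 * A)"
  have tpos: "0 < t" unfolding t_def using Apos Bnn by simp
  have "dual_obj lam \<le> dual_obj (rescale_dual t lam)"
    using O dual_feasible_rescale[OF F tpos] unfolding dual_optimal_def by blast
  then have "A + B \<le> t * A + B / t"
    unfolding dual_obj_split rescale_dual_def A_def B_def by (simp add: sum_distrib_left sum_divide_distrib)
  also have "t * A = (A + B) / 2" unfolding t_def using Apos by simp
  also have "B / t = 2 * A * B / (A + B)" unfolding t_def using Apos Bnn by (simp add: field_simps)
  finally have "(A + B) / 2 \<le> 2 * A * B / (A + B)"
    using field_sum_of_halves[of "A + B"] by (smt (verit))
  then have "(A + B) / 2 * (A + B) \<le> 2 * A * B"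
    using Apos Bnn by (simp add: pos_le_divide_eq)
  then have "(A + B) * (A + B) \<le> 4 * A * B" by simp
  then have "(A - B)^2 \<le> 0" by (simp add: power2_eq_square algebra_simps)
  then show ?thesis unfolding A_def B_def by simp
qed

section \<open>Weak duality\<close>

lemma cinner_game_op:
  fixes \<Phi> :: "'x::finite \<Rightarrow> 'y::finite \<Rightarrow> real"
  assumes A: "\<And>x. A x \<in> carrier_mat n n" and B: "\<And>y. B y \<in> carrier_mat n n"
    and v: "v \<in> carrier_vec n"
  shows "Re (cinner v (game_op \<Phi> n A B *\<^sub>v v))
    = (\<Sum>x\<in>UNIV. \<Sum>y\<in>UNIV. \<Phi> x y * Re (cinner v ((A x * B y) *\<^sub>v v)))"
proof -
  have AB: "\<And>x y. A x * B y \<in> carrier_mat n n" using A B by (metis mult_carrier_mat)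
  have "cinner v (game_op \<Phi> n A B *\<^sub>v v)
      = (\<Sum>p\<in>UNIV. cinner v ((\<lambda>(x,y). complex_of_real (\<Phi> x y) \<cdot>\<^sub>m (A x * B y)) p *\<^sub>v v))"
    unfolding game_op_def by (rule cinner_msum) (use AB v in \<open>auto split: prod.splits\<close>)
  also have "\<dots> = (\<Sum>p\<in>UNIV. case p of (x, y) \<Rightarrow> complex_of_real (\<Phi> x y) * cinner v ((A x * B y) *\<^sub>v v))"
  proof (rule sum.cong[OF refl])
    fix p :: "'x \<times> 'y"
    obtain x y where p: "p = (x,y)" by fastforce
    show "cinner v ((\<lambda>(x,y). complex_of_real (\<Phi> x y) \<cdot>\<^sub>m (A x * B y)) p *\<^sub>v v)
      = (case p of (x, y) \<Rightarrow> complex_of_real (\<Phi> x y) * cinner v ((A x * B y) *\<^sub>v v))"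
      unfolding p using cinner_smult_mat[OF AB[of x y] v v] by simp
  qed
  finally show ?thesis by (simp add: sum_UNIV_prod_case)
qed

lemma quantum_bias_le_dual_obj:
  fixes \<Phi> :: "'x::finite \<Rightarrow> 'y::finite \<Rightarrow> real"
  assumes F: "dual_feasible \<Phi> lam" and S: "quantum_strategy dA dB \<psi> A B"
  shows "quantum_bias \<Phi> dA dB \<psi> A B \<le> dual_obj lam"
proof -
  let ?n = "dA*dB"
  define LA where "LA x = lift_A dA dB (A x)" for x
  define LB where "LB y = lift_B dA dB (B y)" for y
  have \<psi>: "\<psi> \<in> carrier_vec ?n" and unit: "cinner \<psi> \<psi> = 1"
    using S unfolding quantum_strategy_def by auto
  have oA: "obs_mat ?n (LA x)" and oB: "obs_mat ?n (LB y)" for x y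
    using S obs_mat_lift_A obs_mat_lift_B unfolding quantum_strategy_def LA_def LB_def by blast+
  have hA: "herm_mat ?n (LA x)" for x using oA unfolding obs_mat_def by blast
  have cA: "LA x \<in> carrier_mat ?n ?n" for x using hA unfolding herm_mat_def by blast
  have cB: "LB y \<in> carrier_mat ?n ?n" for y using oB unfolding obs_mat_def herm_mat_def by blast
  define p where "p x = LA x *\<^sub>v \<psi>" for x
  define q where "q y = LB y *\<^sub>v \<psi>" for y
  have "quantum_bias \<Phi> dA dB \<psi> A B = (\<Sum>x\<in>UNIV. \<Sum>y\<in>UNIV. \<Phi> x y * Re (cinner \<psi> ((LA x * LB y) *\<^sub>v \<psi>)))"
    unfolding quantum_bias_def LA_def[symmetric] LB_def[symmetric] by (rule cinner_game_op[OF cA cB \<psi>])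
  also have "\<dots> = (\<Sum>x\<in>UNIV. \<Sum>y\<in>UNIV. \<Phi> x y * Re (cinner (p x) (q y)))"
  proof (intro sum.cong refl)
    fix x y
    have "(LA x * LB y) *\<^sub>v \<psi> = LA x *\<^sub>v q y"
      unfolding q_def using cA cB \<psi> by (metis assoc_mult_mat_vec)
    moreover have "cinner \<psi> (LA x *\<^sub>v q y) = cinner (p x) (q y)"
      unfolding p_def by (rule cinner_herm_mat[OF hA]) (use cB[of y] \<psi> in \<open>simp_all add: q_def\<close>)
    ultimately show "\<Phi> x y * Re (cinner \<psi> ((LA x * LB y) *\<^sub>v \<psi>)) = \<Phi> x y * Re (cinner (p x) (q y))"
      by simp
  qed
  also have "\<dots> \<le> (\<Sum>x\<in>UNIV. lam (Inl x) / 2 * Re (cinner (p x) (p x)))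
      + (\<Sum>y\<in>UNIV. lam (Inr y) / 2 * Re (cinner (q y) (q y)))"
    by (rule dual_feasible_cinner_bound[OF F, where n="?n"]) (simp_all add: p_def q_def carrier_matD[OF cA] carrier_matD[OF cB])
  also have "\<dots> = dual_obj lam"
    unfolding p_def q_def cinner_obs_mat[OF oA \<psi>] cinner_obs_mat[OF oB \<psi>] unit dual_obj_split
    by (simp add: sum_divide_distrib add_divide_distrib)
  finally show ?thesis .
qed

section \<open>Tsirelson's construction\<close>

text \<open>On \<open>K\<close> qubits, the Jordan--Wigner matrices
  \<open>\<gamma>\<^sub>i = Z \<otimes> \<dots> \<otimes> Z \<otimes> X \<otimes> 1 \<otimes> \<dots> \<otimes> 1\<close> (with \<open>X\<close> in position \<open>i\<close>) are real, symmetric,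
  square to \<open>1\<close> and pairwise anticommute, so \<open>\<gamma>(u) = \<Sum>\<^sub>i u\<^sub>i \<gamma>\<^sub>i\<close> is a binary observable whenever
  \<open>|u| = 1\<close>; basis states are indexed by natural numbers, qubit \<open>k\<close> being bit \<open>k\<close>.\<close>

definition jw_sign :: "nat \<Rightarrow> nat \<Rightarrow> real" where
  "jw_sign i s = (\<Prod>k<i. if bit s k then -1 else 1)"

definition jw_entry :: "nat \<Rightarrow> nat \<Rightarrow> nat \<Rightarrow> real" where
  "jw_entry i t s = (if t = flip_bit i s then jw_sign i s else 0)"

definition jw_obs :: "nat \<Rightarrow> (nat \<Rightarrow> real) \<Rightarrow> complex mat" where
  "jw_obs K u = Matrix.mat (2^K) (2^K) (\<lambda>(t,s). complex_of_real (\<Sum>i<K. u i * jw_entry i t s))"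

lemma flip_bit_flip_bit[simp]: "flip_bit i (flip_bit i (s::nat)) = s"
  by (rule bit_eqI) (auto simp: bit_flip_bit_iff)

lemma flip_bit_commute: "flip_bit i (flip_bit j (s::nat)) = flip_bit j (flip_bit i s)"
  by (rule bit_eqI) (auto simp: bit_flip_bit_iff)

lemma flip_bit_neq: assumes "i \<noteq> j" shows "flip_bit i (s::nat) \<noteq> flip_bit j s"
proof
  assume eq: "flip_bit i s = flip_bit j s"
  have "bit (flip_bit i s) i \<noteq> bit (flip_bit j s) i" using assms by (simp add: bit_flip_bit_iff)
  then show False using eq by simp
qed

lemma flip_bit_less_power: "(s::nat) < 2^K \<Longrightarrow> i < K \<Longrightarrow> flip_bit i s < 2^K"
  by (metis take_bit_flip_bit_eq take_bit_nat_eq_self_iff not_le)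

lemma jw_sign_square: "jw_sign i s * jw_sign i s = 1"
  unfolding jw_sign_def prod.distrib[symmetric] by (rule prod.neutral) auto

lemma jw_sign_flip_bit_ge: "i \<le> j \<Longrightarrow> jw_sign i (flip_bit j s) = jw_sign i s"
  unfolding jw_sign_def by (rule prod.cong) (auto simp: bit_flip_bit_iff)

lemma jw_sign_flip_bit_less: assumes "j < i" shows "jw_sign i (flip_bit j s) = - jw_sign i s"
proof -
  have j: "j \<in> {..<i}" using assms by simp
  have "jw_sign i (flip_bit j s) = (if bit (flip_bit j s) j then -1 else 1) *
      (\<Prod>k\<in>{..<i}-{j}. if bit (flip_bit j s) k then -1 else 1)"
    unfolding jw_sign_def by (rule prod.remove[OF _ j]) simp
  also have "(\<Prod>k\<in>{..<i}-{j}. if bit (flip_bit j s) k then -1 else 1) =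
     (\<Prod>k\<in>{..<i}-{j}. if bit s k then -1 else (1::real))"
    by (rule prod.cong) (auto simp: bit_flip_bit_iff)
  also have "(if bit (flip_bit j s) j then -1 else 1) = - (if bit s j then -1 else (1::real))"
    by (simp add: bit_flip_bit_iff)
  finally have "jw_sign i (flip_bit j s) = - ((if bit s j then -1 else 1) *
      (\<Prod>k\<in>{..<i}-{j}. if bit s k then -1 else (1::real)))" by simp
  also have "\<dots> = - jw_sign i s"
    unfolding jw_sign_def by (subst prod.remove[OF _ j]) simp_all
  finally show ?thesis .
qed

lemma jw_entry_sym: "jw_entry i t s = jw_entry i s t"
  unfolding jw_entry_def by (auto simp: jw_sign_flip_bit_ge)

lemma jw_obs_carrier: "jw_obs K u \<in> carrier_mat (2^K) (2^K)"
  unfolding jw_obs_def by simp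

lemma jw_obs_index: "t < 2^K \<Longrightarrow> s < 2^K \<Longrightarrow> jw_obs K u $$ (t,s) = complex_of_real (\<Sum>i<K. u i * jw_entry i t s)"
  unfolding jw_obs_def by simp

lemma herm_mat_jw_obs: "herm_mat (2^K) (jw_obs K u)"
  unfolding herm_mat_def
proof (intro conjI allI impI jw_obs_carrier)
  fix t s :: nat assume t: "t < 2^K" and s: "s < 2^K"
  have "(\<Sum>i<K. u i * jw_entry i t s) = (\<Sum>i<K. u i * jw_entry i s t)"
    by (intro sum.cong refl) (rule arg_cong[OF jw_entry_sym])
  then show "jw_obs K u $$ (t, s) = cnj (jw_obs K u $$ (s, t))"
    using t s by (simp only: jw_obs_index complex_cnj_complex_of_real)
qed

lemma sum_sum_antisym:
  fixes f :: "'a \<Rightarrow> 'a \<Rightarrow> real"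
  assumes "finite A" "\<And>i j. i \<noteq> j \<Longrightarrow> f i j = - f j i"
  shows "(\<Sum>i\<in>A. \<Sum>j\<in>A. f i j) = (\<Sum>i\<in>A. f i i)"
proof -
  define g where "g i j = (if i = j then 0 else f i j)" for i j
  have gi: "g i j = - g j i" for i j
  proof (cases "i = j")
    case True then show ?thesis by (simp add: g_def)
  next
    case False then show ?thesis using assms(2)[of i j] by (simp add: g_def)
  qed
  have "(\<Sum>i\<in>A. \<Sum>j\<in>A. g i j) = (\<Sum>j\<in>A. \<Sum>i\<in>A. g i j)" by (rule sum.swap)
  also have "\<dots> = (\<Sum>j\<in>A. \<Sum>i\<in>A. - g j i)"
    by (intro sum.cong refl) (rule gi)
  also have "\<dots> = - (\<Sum>i\<in>A. \<Sum>j\<in>A. g i j)" by (simp add: sum_negf)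
  finally have g0: "(\<Sum>i\<in>A. \<Sum>j\<in>A. g i j) = 0" by simp
  have "(\<Sum>i\<in>A. \<Sum>j\<in>A. f i j) = (\<Sum>i\<in>A. \<Sum>j\<in>A. g i j + (if i = j then f i i else 0))"
    by (intro sum.cong refl) (auto simp: g_def)
  also have "\<dots> = (\<Sum>i\<in>A. \<Sum>j\<in>A. g i j) + (\<Sum>i\<in>A. f i i)"
    using assms(1) by (simp add: sum.distrib)
  finally show ?thesis using g0 by simp
qed

lemma sum_jw_entry_mult: assumes "s < 2^K" "j < K"
  shows "(\<Sum>r<2^K. jw_entry i t r * jw_entry j r s) = jw_entry i t (flip_bit j s) * jw_sign j s"
proof -
  have "(\<Sum>r<2^K. jw_entry i t r * jw_entry j r s) = (\<Sum>r<2^K. if r = flip_bit j s then jw_entry i t (flip_bit j s) * jw_sign j s else 0)"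
    by (intro sum.cong refl) (auto simp: jw_entry_def[of j])
  also have "\<dots> = jw_entry i t (flip_bit j s) * jw_sign j s"
    using flip_bit_less_power[OF assms] by simp
  finally show ?thesis .
qed

lemma jw_entry_flip_same: "jw_entry i t (flip_bit i s) * jw_sign i s = (if t = s then 1 else 0)"
  unfolding jw_entry_def by (auto simp: jw_sign_flip_bit_ge jw_sign_square)

lemma jw_entry_flip_anticomm_less: assumes "i < j"
  shows "jw_entry i t (flip_bit j s) * jw_sign j s = - (jw_entry j t (flip_bit i s) * jw_sign i s)"
  unfolding jw_entry_def using assms by (auto simp: jw_sign_flip_bit_ge jw_sign_flip_bit_less flip_bit_commute)

lemma jw_entry_flip_anticomm: assumes "i \<noteq> j"
  shows "jw_entry i t (flip_bit j s) * jw_sign j s = - (jw_entry j t (flip_bit i s) * jw_sign i s)"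
proof (cases "i < j")
  case True then show ?thesis by (rule jw_entry_flip_anticomm_less)
next
  case False then have "j < i" using assms by simp
  from jw_entry_flip_anticomm_less[OF this, of t s] show ?thesis by simp
qed

lemma jw_obs_square: assumes "(\<Sum>i<K. (u i)^2) = 1"
  shows "jw_obs K u * jw_obs K u = 1\<^sub>m (2^K)"
proof (rule eq_matI)
  fix t s assume t: "t < dim_row (1\<^sub>m (2^K) :: complex mat)" and s: "s < dim_col (1\<^sub>m (2^K) :: complex mat)"
  then have t: "t < 2^K" and s: "s < 2^K" by auto
  have "(jw_obs K u * jw_obs K u) $$ (t,s) = (\<Sum>r<2^K. jw_obs K u $$ (t,r) * jw_obs K u $$ (r,s))"
    using t s jw_obs_carrier[of K u] by (simp add: scalar_prod_def atLeast0LessThan)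
  also have "\<dots> = complex_of_real (\<Sum>r<2^K. (\<Sum>i<K. u i * jw_entry i t r) * (\<Sum>j<K. u j * jw_entry j r s))"
    using t s by (simp add: jw_obs_index)
  also have "(\<Sum>r<2^K. (\<Sum>i<K. u i * jw_entry i t r) * (\<Sum>j<K. u j * jw_entry j r s)) =
     (\<Sum>i<K. \<Sum>j<K. u i * u j * (\<Sum>r<(2::nat)^K. jw_entry i t r * jw_entry j r s))"
    by (simp add: sum_product sum_distrib_left sum.swap[where A="{..<(2::nat)^K}"] mult_ac)
  also have "\<dots> = (\<Sum>i<K. \<Sum>j<K. u i * u j * (jw_entry i t (flip_bit j s) * jw_sign j s))"
    using s by (intro sum.cong refl) (simp add: sum_jw_entry_mult)
  also have "\<dots> = (\<Sum>i<K. u i * u i * (jw_entry i t (flip_bit i s) * jw_sign i s))"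
  proof (rule sum_sum_antisym)
    fix i j :: nat assume ij: "i \<noteq> j"
    have h: "jw_entry i t (flip_bit j s) * jw_sign j s = - (jw_entry j t (flip_bit i s) * jw_sign i s)"
      by (rule jw_entry_flip_anticomm[OF ij])
    show "u i * u j * (jw_entry i t (flip_bit j s) * jw_sign j s) = - (u j * u i * (jw_entry j t (flip_bit i s) * jw_sign i s))"
      unfolding h by (simp add: mult_ac)
  qed simp
  also have "\<dots> = (\<Sum>i<K. (u i)^2) * (if t = s then 1 else 0)"
    by (simp add: jw_entry_flip_same sum_distrib_right power2_eq_square)
  finally show "(jw_obs K u * jw_obs K u) $$ (t,s) = (1\<^sub>m (2^K) :: complex mat) $$ (t,s)"
    using t s assms by simp
qed (use jw_obs_carrier in auto)

lemma obs_mat_jw_obs: "(\<Sum>i<K. (u i)^2) = 1 \<Longrightarrow> obs_mat (2^K) (jw_obs K u)"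
  unfolding obs_mat_def using herm_mat_jw_obs jw_obs_square by blast

definition max_entangled :: "nat \<Rightarrow> complex Matrix.vec" where
  "max_entangled d = Matrix.vec (d*d) (\<lambda>k. complex_of_real (if k div d = k mod d then 1 / sqrt d else 0))"

lemma max_entangled_carrier: "max_entangled d \<in> carrier_vec (d*d)"
  unfolding max_entangled_def by simp

lemma max_entangled_index: "p < d \<Longrightarrow> q < d \<Longrightarrow> max_entangled d $ (p*d+q) = complex_of_real (if p = q then 1 / sqrt d else 0)"
proof -
  assume p: "p < d" and q: "q < d"
  have k: "p*d+q < d*d" using p q by (rule mult_index_less)
  have "(p*d+q) div d = p" "(p*d+q) mod d = q" using q by auto
  then show ?thesis unfolding max_entangled_def using k by simp
qed

lemma of_real_inverse_sqrt_square: "complex_of_real (1/sqrt (real d)) * complex_of_real (1/sqrt (real d)) = complex_of_real (1/real d)"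
proof -
  have s: "sqrt (real d) * sqrt (real d) = real d" by simp
  have "(1/sqrt (real d)) * (1/sqrt (real d)) = 1 / (sqrt (real d) * sqrt (real d))" by simp
  then have "(1/sqrt (real d)) * (1/sqrt (real d)) = 1 / real d" unfolding s .
  then show ?thesis by (metis of_real_mult)
qed

lemma cinner_max_entangled: assumes "0 < d" shows "cinner (max_entangled d) (max_entangled d) = 1"
proof -
  have "cinner (max_entangled d) (max_entangled d) = (\<Sum>k<d*d. cnj (max_entangled d $ k) * max_entangled d $ k)"
    unfolding cinner_def using max_entangled_carrier[of d] by simp
  also have "\<dots> = (\<Sum>p<d. \<Sum>q<d. cnj (max_entangled d $ (p*d+q)) * max_entangled d $ (p*d+q))"
    by (rule sum_lessThan_mult_nat)
  also have "\<dots> = (\<Sum>p<d. \<Sum>q<d. if q = p then complex_of_real (1/d) else 0)"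
  proof (intro sum.cong refl)
    fix p q show "p \<in> {..<d} \<Longrightarrow> q \<in> {..<d} \<Longrightarrow> cnj (max_entangled d $ (p*d+q)) * max_entangled d $ (p*d+q) = (if q = p then complex_of_real (1/d) else 0)"
    proof -
      assume pq: "p \<in> {..<d}" "q \<in> {..<d}"
      have e: "max_entangled d $ (p*d+q) = complex_of_real (if p = q then 1/sqrt d else 0)"
        using pq by (intro max_entangled_index) auto
      show ?thesis
      proof (cases "q = p")
        case True
        then show ?thesis unfolding e by (simp only: if_True refl complex_cnj_complex_of_real of_real_inverse_sqrt_square)
      next
        case False
        then show ?thesis unfolding e by simp
      qed
    qed
  qed
  also have "\<dots> = 1" using assms by simp
  finally show ?thesis .
qed

lemma cinner_max_entangled_kron: assumes A: "A \<in> carrier_mat d d" and B: "B \<in> carrier_mat d d"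
  shows "cinner (max_entangled d) (kron A B *\<^sub>v max_entangled d) = complex_of_real (1/d) * (\<Sum>p<d. \<Sum>q<d. A$$(p,q) * B$$(p,q))"
proof -
  have KC: "kron A B \<in> carrier_mat (d*d) (d*d)" using A B by (rule kron_carrier)
  define c where "c = complex_of_real (1 / sqrt d)"
  have cc: "cnj c * c = complex_of_real (1/d)"
    unfolding c_def complex_cnj_complex_of_real by (rule of_real_inverse_sqrt_square)
  have "cinner (max_entangled d) (kron A B *\<^sub>v max_entangled d) = (\<Sum>k<d*d. \<Sum>l<d*d. cnj (max_entangled d $ k) * kron A B $$ (k,l) * max_entangled d $ l)"
    by (rule cinner_mult_mat_vec[OF KC max_entangled_carrier max_entangled_carrier])
  also have "\<dots> = (\<Sum>p<d. \<Sum>p'<d. \<Sum>q<d. \<Sum>q'<d. cnj (max_entangled d $ (p*d+p')) * kron A B $$ (p*d+p',q*d+q') * max_entangled d $ (q*d+q'))"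
    by (simp only: sum_lessThan_mult_nat)
  also have "\<dots> = (\<Sum>p<d. \<Sum>p'<d. \<Sum>q<d. \<Sum>q'<d. if p' = p then (if q' = q then cnj c * c * (A$$(p,q) * B$$(p,q)) else 0) else 0)"
  proof (intro sum.cong refl)
    fix p p' q q' assume p: "p \<in> {..<d}" and p': "p' \<in> {..<d}" and q: "q \<in> {..<d}" and q': "q' \<in> {..<d}"
    have dims: "dim_row A = d" "dim_col A = d" "dim_row B = d" "dim_col B = d" using A B by auto
    have k1: "p*d+p' < dim_row A * dim_row B" "q*d+q' < dim_col A * dim_col B"
      using p p' q q' dims by (auto intro: mult_index_less)
    have dm: "(p*d+p') div d = p" "(p*d+p') mod d = p'" "(q*d+q') div d = q" "(q*d+q') mod d = q'"
      using p' q' by auto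
    have "kron A B $$ (p*d+p',q*d+q') = A$$(p,q) * B$$(p',q')"
      using kron_index[OF k1] dims dm by simp
    then show "cnj (max_entangled d $ (p*d+p')) * kron A B $$ (p*d+p',q*d+q') * max_entangled d $ (q*d+q') =
      (if p' = p then (if q' = q then cnj c * c * (A$$(p,q) * B$$(p,q)) else 0) else 0)"
      using p p' q q' by (auto simp: max_entangled_index c_def)
  qed
  also have "\<dots> = (\<Sum>p<d. \<Sum>q<d. cnj c * c * (A$$(p,q) * B$$(p,q)))"
  proof (rule sum.cong[OF refl])
    fix p assume p: "p \<in> {..<d}"
    define X where "X q = cnj c * c * (A$$(p,q) * B$$(p,q))" for q
    have "(\<Sum>p'<d. \<Sum>q<d. \<Sum>q'<d. if p' = p then (if q' = q then X q else 0) else 0)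
        = (\<Sum>p'<d. \<Sum>q<d. if p' = p then X q else 0)"
      by (intro sum.cong refl) (auto simp: sum.delta')
    also have "\<dots> = (\<Sum>p'<d. if p' = p then (\<Sum>q<d. X q) else 0)"
      by (intro sum.cong refl) auto
    also have "\<dots> = (\<Sum>q<d. X q)" using p by (simp add: sum.delta')
    finally show "(\<Sum>p'<d. \<Sum>q<d. \<Sum>q'<d. if p' = p then (if q' = q then cnj c * c * (A$$(p,q) * B$$(p,q)) else 0) else 0)
        = (\<Sum>q<d. cnj c * c * (A$$(p,q) * B$$(p,q)))" unfolding X_def .
  qed
  also have "\<dots> = complex_of_real (1/d) * (\<Sum>p<d. \<Sum>q<d. A$$(p,q) * B$$(p,q))"
    unfolding cc by (simp add: sum_distrib_left)
  finally show ?thesis .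
qed

lemma sum_jw_entry_orthogonal: assumes "i < K" "j < K"
  shows "(\<Sum>p<(2::nat)^K. \<Sum>q<(2::nat)^K. jw_entry i p q * jw_entry j p q) = (if i = j then 2^K else 0)"
proof -
  have "(\<Sum>p<(2::nat)^K. \<Sum>q<(2::nat)^K. jw_entry i p q * jw_entry j p q) = (\<Sum>q<(2::nat)^K. \<Sum>p<(2::nat)^K. jw_entry i p q * jw_entry j p q)"
    by (rule sum.swap)
  also have "\<dots> = (\<Sum>q<(2::nat)^K. if i = j then 1 else 0)"
  proof (rule sum.cong[OF refl])
    fix q assume q: "q \<in> {..<(2::nat)^K}"
    have "(\<Sum>p<(2::nat)^K. jw_entry i p q * jw_entry j p q) = (\<Sum>p<(2::nat)^K. if p = flip_bit j q then jw_entry i (flip_bit j q) q * jw_sign j q else 0)"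
      by (intro sum.cong refl) (auto simp: jw_entry_def[of j])
    also have "\<dots> = jw_entry i (flip_bit j q) q * jw_sign j q"
      using flip_bit_less_power[of q K j] q assms by simp
    also have "\<dots> = (if i = j then 1 else 0)"
      unfolding jw_entry_def using flip_bit_neq[of i j q] by (auto simp: jw_sign_square)
    finally show "(\<Sum>p<(2::nat)^K. jw_entry i p q * jw_entry j p q) = (if i = j then 1 else 0)" .
  qed
  also have "\<dots> = (if i = j then 2^K else 0)" by simp
  finally show ?thesis .
qed

lemma sum_jw_obs_entry_mult: "(\<Sum>p<(2::nat)^K. \<Sum>q<(2::nat)^K. jw_obs K u $$ (p,q) * jw_obs K v $$ (p,q)) =
    complex_of_real (2^K * (\<Sum>i<K. u i * v i))"
proof -
  have "(\<Sum>p<(2::nat)^K. \<Sum>q<(2::nat)^K. jw_obs K u $$ (p,q) * jw_obs K v $$ (p,q)) =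
     complex_of_real (\<Sum>p<(2::nat)^K. \<Sum>q<(2::nat)^K. (\<Sum>i<K. u i * jw_entry i p q) * (\<Sum>j<K. v j * jw_entry j p q))"
    by (simp add: jw_obs_index)
  also have "(\<Sum>p<(2::nat)^K. \<Sum>q<(2::nat)^K. (\<Sum>i<K. u i * jw_entry i p q) * (\<Sum>j<K. v j * jw_entry j p q)) =
     (\<Sum>i<K. \<Sum>j<K. u i * v j * (\<Sum>p<(2::nat)^K. \<Sum>q<(2::nat)^K. jw_entry i p q * jw_entry j p q))"
  proof -
    have "(\<Sum>p<(2::nat)^K. \<Sum>q<(2::nat)^K. (\<Sum>i<K. u i * jw_entry i p q) * (\<Sum>j<K. v j * jw_entry j p q)) =
      (\<Sum>p<(2::nat)^K. \<Sum>q<(2::nat)^K. \<Sum>i<K. \<Sum>j<K. u i * v j * (jw_entry i p q * jw_entry j p q))"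
      by (intro sum.cong refl) (simp add: sum_product mult_ac)
    also have "\<dots> = (\<Sum>i<K. \<Sum>j<K. \<Sum>p<(2::nat)^K. \<Sum>q<(2::nat)^K. u i * v j * (jw_entry i p q * jw_entry j p q))"
      by (simp only: sum.swap[where A="{..<(2::nat)^K}" and B="{..<K}"])
    also have "\<dots> = (\<Sum>i<K. \<Sum>j<K. u i * v j * (\<Sum>p<(2::nat)^K. \<Sum>q<(2::nat)^K. jw_entry i p q * jw_entry j p q))"
      by (simp only: sum_distrib_left)
    finally show ?thesis .
  qed
  also have "\<dots> = (\<Sum>i<K. \<Sum>j<K. u i * v j * (if i = j then 2^K else 0))"
    by (intro sum.cong refl) (simp add: sum_jw_entry_orthogonal)
  also have "\<dots> = (\<Sum>i<K. u i * v i * 2^K)"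
  proof (rule sum.cong[OF refl])
    fix i assume i: "i \<in> {..<K}"
    have "\<And>j. u i * v j * (if i = j then 2^K else 0) = (if i = j then u i * v i * 2^K else (0::real))" by simp
    then show "(\<Sum>j<K. u i * v j * (if i = j then 2^K else 0)) = u i * v i * 2^K"
      using i by (simp only: sum.delta) simp
  qed
  also have "\<dots> = 2^K * (\<Sum>i<K. u i * v i)"
    by (simp add: sum_distrib_left mult_ac)
  finally show ?thesis .
qed

lemma jw_strategy:
  fixes \<Phi> :: "'x::finite \<Rightarrow> 'y::finite \<Rightarrow> real" and u :: "'x \<Rightarrow> nat \<Rightarrow> real" and v :: "'y \<Rightarrow> nat \<Rightarrow> real"
  assumes u: "\<And>x. (\<Sum>k<K. (u x k)^2) = 1" and v: "\<And>y. (\<Sum>k<K. (v y k)^2) = 1"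
  shows "quantum_strategy (2^K) (2^K) (max_entangled (2^K)) (\<lambda>x. jw_obs K (u x)) (\<lambda>y. jw_obs K (v y)) \<and>
    quantum_bias \<Phi> (2^K) (2^K) (max_entangled (2^K)) (\<lambda>x. jw_obs K (u x)) (\<lambda>y. jw_obs K (v y))
      = (\<Sum>x\<in>UNIV. \<Sum>y\<in>UNIV. \<Phi> x y * (\<Sum>k<K. u x k * v y k))"
proof
  show "quantum_strategy (2^K) (2^K) (max_entangled (2^K)) (\<lambda>x. jw_obs K (u x)) (\<lambda>y. jw_obs K (v y))"
    unfolding quantum_strategy_def using max_entangled_carrier cinner_max_entangled obs_mat_jw_obs[OF u] obs_mat_jw_obs[OF v] by simp
  let ?d = "(2::nat)^K"
  have "quantum_bias \<Phi> ?d ?d (max_entangled ?d) (\<lambda>x. jw_obs K (u x)) (\<lambda>y. jw_obs K (v y)) =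
     (\<Sum>x\<in>UNIV. \<Sum>y\<in>UNIV. \<Phi> x y * Re (cinner (max_entangled ?d) ((lift_A ?d ?d (jw_obs K (u x)) * lift_B ?d ?d (jw_obs K (v y))) *\<^sub>v max_entangled ?d)))"
    unfolding quantum_bias_def
    by (rule cinner_game_op) (auto simp: lift_A_carrier lift_B_carrier jw_obs_carrier max_entangled_carrier)
  also have "\<dots> = (\<Sum>x\<in>UNIV. \<Sum>y\<in>UNIV. \<Phi> x y * (\<Sum>k<K. u x k * v y k))"
  proof (intro sum.cong refl)
    fix x y
    have "cinner (max_entangled ?d) ((lift_A ?d ?d (jw_obs K (u x)) * lift_B ?d ?d (jw_obs K (v y))) *\<^sub>v max_entangled ?d)
        = cinner (max_entangled ?d) (kron (jw_obs K (u x)) (jw_obs K (v y)) *\<^sub>v max_entangled ?d)"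
      by (simp add: lift_A_mult_lift_B(1) jw_obs_carrier)
    also have "\<dots> = complex_of_real (1/?d) * complex_of_real (?d * (\<Sum>k<K. u x k * v y k))"
      by (simp only: cinner_max_entangled_kron jw_obs_carrier sum_jw_obs_entry_mult) simp
    also have "\<dots> = complex_of_real (\<Sum>k<K. u x k * v y k)"
      by (simp del: of_real_sum)
    finally show "\<Phi> x y * Re (cinner (max_entangled ?d) ((lift_A ?d ?d (jw_obs K (u x)) * lift_B ?d ?d (jw_obs K (v y))) *\<^sub>v max_entangled ?d)) =
      \<Phi> x y * (\<Sum>k<K. u x k * v y k)" by simp
  qed
  finally show "quantum_bias \<Phi> ?d ?d (max_entangled ?d) (\<lambda>x. jw_obs K (u x)) (\<lambda>y. jw_obs K (v y)) = (\<Sum>x\<in>UNIV. \<Sum>y\<in>UNIV. \<Phi> x y * (\<Sum>k<K. u x k * v y k))" .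
qed

section \<open>Strong duality\<close>

definition vector_bias :: "('x::finite \<Rightarrow> 'y::finite \<Rightarrow> real) \<Rightarrow> nat \<Rightarrow> ('x + 'y \<Rightarrow> nat \<Rightarrow> real) \<Rightarrow> real" where
  "vector_bias \<Phi> K w = (\<Sum>x\<in>UNIV. \<Sum>y\<in>UNIV. \<Phi> x y * (\<Sum>k<K. w (Inl x) k * w (Inr y) k))"

lemma vector_bias_scale: "vector_bias \<Phi> K (\<lambda>i k. c * w i k) = c^2 * vector_bias \<Phi> K w"
  unfolding vector_bias_def by (simp add: sum_distrib_left power2_eq_square mult_ac)

lemma sum_UNIV_option: "(\<Sum>j\<in>(UNIV :: ('a::finite) option set). g j) = g None + (\<Sum>i\<in>UNIV. g (Some i))"
proof -
  have "(\<Sum>j\<in>(UNIV :: 'a option set). g j) = sum g (insert None (range Some))"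
    by (metis UNIV_option_conv)
  also have "\<dots> = g None + sum g (range Some)" by (rule sum.insert) auto
  also have "sum g (range Some) = (\<Sum>i\<in>UNIV. g (Some i))" by (simp add: sum.reindex)
  finally show ?thesis .
qed

text \<open>Coordinate \<open>None\<close> carries the bias of the one-dimensional vector strategy \<open>v\<close>, coordinate
  \<open>Some i\<close> the squared norm of \<open>v i\<close>; convex combinations of these moments of unit vectors are
  exactly the moments of vector families.\<close>

definition moment_vec :: "('x::finite \<Rightarrow> 'y::finite \<Rightarrow> real) \<Rightarrow> real^('x+'y) \<Rightarrow> real^(('x+'y) option)" where
  "moment_vec \<Phi> v = (\<chi> j. case j of
      None \<Rightarrow> (\<Sum>x\<in>UNIV. \<Sum>y\<in>UNIV. \<Phi> x y * vec_nth v (Inl x) * vec_nth v (Inr y))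
    | Some i \<Rightarrow> (vec_nth v i)^2)"

lemma continuous_on_moment_vec: "continuous_on UNIV (moment_vec \<Phi>)"
  unfolding moment_vec_def
proof (rule continuous_on_vec_lambda)
  fix j :: "('a + 'b) option"
  show "continuous_on UNIV (\<lambda>v. case j of
      None \<Rightarrow> (\<Sum>x\<in>UNIV. \<Sum>y\<in>UNIV. \<Phi> x y * vec_nth v (Inl x) * vec_nth v (Inr y))
    | Some i \<Rightarrow> (vec_nth v i)^2)"
    by (cases j) (auto intro!: continuous_intros)
qed

lemma inner_moment_vec:
  "inner a (moment_vec \<Phi> v)
    = vec_nth a None * (\<Sum>x\<in>UNIV. \<Sum>y\<in>UNIV. \<Phi> x y * vec_nth v (Inl x) * vec_nth v (Inr y))
      + (\<Sum>i\<in>UNIV. vec_nth a (Some i) * (vec_nth v i)^2)"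
  unfolding inner_vec_def moment_vec_def by (simp add: sum_UNIV_option)

lemma power2_norm_vec: "(norm (v :: real^'n))^2 = (\<Sum>i\<in>UNIV. (vec_nth v i)^2)"
  unfolding power2_norm_eq_inner inner_vec_def by (simp add: power2_eq_square)

lemma convex_hull_moment_vec:
  fixes \<Phi> :: "'x::finite \<Rightarrow> 'y::finite \<Rightarrow> real"
  assumes "z \<in> convex hull (moment_vec \<Phi> ` sphere (0::real^('x+'y)) 1)"
  obtains K w where "\<And>i. (\<Sum>k<K. (w i k)^2) = vec_nth z (Some i)"
    and "vector_bias \<Phi> K w = vec_nth z None"
proof -
  obtain S u where fin: "finite S" and sub: "S \<subseteq> moment_vec \<Phi> ` sphere 0 1"
    and nn: "\<forall>x\<in>S. 0 \<le> u x" and comb: "(\<Sum>v\<in>S. u v *\<^sub>R v) = z"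
    using assms unfolding convex_hull_explicit by blast
  obtain h where hb: "bij_betw h {0..<card S} S" using ex_bij_betw_nat_finite[OF fin] by blast
  have "\<forall>p\<in>S. \<exists>v. p = moment_vec \<Phi> v" using sub by blast
  then obtain V where V: "\<And>p. p \<in> S \<Longrightarrow> moment_vec \<Phi> (V p) = p" by metis
  have comp: "vec_nth z j = (\<Sum>p\<in>S. u p * vec_nth (moment_vec \<Phi> (V p)) j)" for j
  proof -
    have "vec_nth z j = (\<Sum>p\<in>S. u p * vec_nth p j)"
      unfolding comb[symmetric] by (simp add: sum_component)
    also have "\<dots> = (\<Sum>p\<in>S. u p * vec_nth (moment_vec \<Phi> (V p)) j)"
      by (intro sum.cong refl) (simp add: V)
    finally show ?thesis .
  qed
  define K where "K = card S"
  define w where "w i k = sqrt (u (h k)) * vec_nth (V (h k)) i" for i k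
  have reindex: "(\<Sum>k<K. g (h k)) = (\<Sum>p\<in>S. g p)" for g :: "real^(('x + 'y) option) \<Rightarrow> real"
    unfolding K_def lessThan_atLeast0 by (rule sum.reindex_bij_betw[OF hb])
  have w2: "w i k * w j k = u (h k) * (vec_nth (V (h k)) i * vec_nth (V (h k)) j)" if "k < K" for i j k
  proof -
    have "0 \<le> u (h k)" using hb nn that unfolding K_def bij_betw_def by auto
    then have "sqrt (u (h k)) * sqrt (u (h k)) = u (h k)" by simp
    then show ?thesis unfolding w_def by (simp add: algebra_simps)
  qed
  show ?thesis
  proof
    fix i
    have "(\<Sum>k<K. (w i k)^2) = (\<Sum>k<K. u (h k) * (vec_nth (V (h k)) i)^2)"
      by (intro sum.cong refl) (simp add: power2_eq_square w2)
    also have "\<dots> = (\<Sum>p\<in>S. u p * (vec_nth (V p) i)^2)" by (rule reindex)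
    also have "\<dots> = vec_nth z (Some i)" unfolding comp by (simp add: moment_vec_def)
    finally show "(\<Sum>k<K. (w i k)^2) = vec_nth z (Some i)" .
  next
    have "vector_bias \<Phi> K w = (\<Sum>x\<in>UNIV. \<Sum>y\<in>UNIV. \<Sum>k<K. u (h k) *
        (\<Phi> x y * vec_nth (V (h k)) (Inl x) * vec_nth (V (h k)) (Inr y)))"
      unfolding vector_bias_def sum_distrib_left by (intro sum.cong refl) (simp add: w2 mult_ac)
    also have "\<dots> = (\<Sum>k<K. u (h k) *
        (\<Sum>x\<in>UNIV. \<Sum>y\<in>UNIV. \<Phi> x y * vec_nth (V (h k)) (Inl x) * vec_nth (V (h k)) (Inr y)))"
      unfolding sum_distrib_left by (simp only: sum.swap[where B="{..<K}"])
    also have "\<dots> = (\<Sum>p\<in>S. u p *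
        (\<Sum>x\<in>UNIV. \<Sum>y\<in>UNIV. \<Phi> x y * vec_nth (V p) (Inl x) * vec_nth (V p) (Inr y)))"
      by (rule reindex)
    also have "\<dots> = vec_nth z None" unfolding comp by (simp add: moment_vec_def)
    finally show "vector_bias \<Phi> K w = vec_nth z None" .
  qed
qed

definition moment_target :: "real \<Rightarrow> real^(('x::finite + 'y::finite) option)" where
  "moment_target D = (\<chi> j. case j of None \<Rightarrow> D / real CARD('x + 'y) | Some i \<Rightarrow> 1 / real CARD('x + 'y))"

lemma moment_target_notin_hull:
  fixes \<Phi> :: "'x::finite \<Rightarrow> 'y::finite \<Rightarrow> real"
  assumes H: "\<And>K w. (\<And>i. (\<Sum>k<K. (w i k)^2) = 1) \<Longrightarrow> vector_bias \<Phi> K w \<le> \<xi>"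
    and D: "\<xi> < D"
  shows "(moment_target D :: real^(('x + 'y) option)) \<notin> convex hull (moment_vec \<Phi> ` sphere (0::real^('x+'y)) 1)"
proof
  define N where "N = real CARD('x + 'y)"
  have N: "0 < N" unfolding N_def of_nat_0_less_iff by (rule finite_UNIV_card_ge_0) simp
  assume "(moment_target D :: real^(('x + 'y) option)) \<in> convex hull (moment_vec \<Phi> ` sphere (0::real^('x+'y)) 1)"
  then obtain K w where w: "\<And>i. (\<Sum>k<K. (w i k)^2) = 1 / N" and bias: "vector_bias \<Phi> K w = D / N"
    by (rule convex_hull_moment_vec) (auto simp: moment_target_def N_def)
  have "(\<Sum>k<K. (sqrt N * w i k)^2) = 1" for i
    using N w[of i] by (simp add: power_mult_distrib sum_distrib_left[symmetric])
  then have "vector_bias \<Phi> K (\<lambda>i k. sqrt N * w i k) \<le> \<xi>" by (rule H)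
  then show False using N D by (simp add: vector_bias_scale bias)
qed

lemma separation_quadratic_nonneg:
  fixes \<Phi> :: "'x::finite \<Rightarrow> 'y::finite \<Rightarrow> real"
  assumes sep: "\<And>w. w \<in> sphere (0::real^('x+'y)) 1 \<Longrightarrow> b < inner a (moment_vec \<Phi> w)"
  shows "0 \<le> (\<Sum>i\<in>UNIV. (vec_nth a (Some i) - b) * (f i)^2) + vec_nth a None * (\<Sum>x\<in>UNIV. \<Sum>y\<in>UNIV. \<Phi> x y * f (Inl x) * f (Inr y))"
proof (cases "\<forall>i. f i = 0")
  case True then show ?thesis by simp
next
  case False
  define v :: "real^('x+'y)" where "v = (\<chi> i. f i)"
  have vf: "vec_nth v i = f i" for i unfolding v_def by simp
  have vnz: "v \<noteq> 0" using False vf by (metis zero_index)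
  define c where "c = norm v"
  have cpos: "0 < c" unfolding c_def using vnz by simp
  define w where "w = (1/c) *\<^sub>R v"
  have ws: "w \<in> sphere 0 1" unfolding w_def c_def using vnz by simp
  define g where "g i = vec_nth w i" for i
  have fg: "f i = c * g i" for i unfolding g_def w_def using cpos by (simp add: vf)
  define P where "P h = vec_nth a None * (\<Sum>x\<in>UNIV. \<Sum>y\<in>UNIV. \<Phi> x y * h (Inl x) * h (Inr y))
      + (\<Sum>i\<in>UNIV. vec_nth a (Some i) * (h i)^2)" for h :: "'x + 'y \<Rightarrow> real"
  have "b < inner a (moment_vec \<Phi> w)" by (rule sep[OF ws])
  also have "inner a (moment_vec \<Phi> w) = P g" unfolding inner_moment_vec P_def g_def ..
  finally have bP: "b < P g" .
  have g1: "(\<Sum>i\<in>UNIV. (g i)^2) = 1"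
    using ws unfolding g_def power2_norm_vec[symmetric] by simp
  have e1: "(\<Sum>x\<in>UNIV. \<Sum>y\<in>UNIV. \<Phi> x y * f (Inl x) * f (Inr y)) = c^2 * (\<Sum>x\<in>UNIV. \<Sum>y\<in>UNIV. \<Phi> x y * g (Inl x) * g (Inr y))"
    unfolding fg sum_distrib_left by (intro sum.cong refl) (simp add: power2_eq_square mult_ac)
  have e2: "(\<Sum>i\<in>UNIV. vec_nth a (Some i) * (f i)^2) = c^2 * (\<Sum>i\<in>UNIV. vec_nth a (Some i) * (g i)^2)"
    unfolding fg sum_distrib_left by (intro sum.cong refl) (simp add: power_mult_distrib mult_ac)
  have e3: "(\<Sum>i\<in>UNIV. (f i)^2) = c^2"
    unfolding fg power_mult_distrib sum_distrib_left[symmetric] g1 by simp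
  have "(\<Sum>i\<in>UNIV. (vec_nth a (Some i) - b) * (f i)^2) + vec_nth a None * (\<Sum>x\<in>UNIV. \<Sum>y\<in>UNIV. \<Phi> x y * f (Inl x) * f (Inr y))
     = P f - b * (\<Sum>i\<in>UNIV. (f i)^2)"
    unfolding P_def by (simp add: left_diff_distrib sum_subtractf sum_distrib_left)
  also have "\<dots> = c^2 * (P g - b)"
    unfolding e3 P_def e1 e2 by (simp add: algebra_simps)
  finally show ?thesis using bP cpos by simp
qed

text \<open>Separating the target moment vector from the compact convex hull of all moment vectors of
  unit vectors produces a quadratic form \<open>\<Sum>\<^sub>i \<gamma>\<^sub>i f\<^sub>i\<^sup>2 + \<beta> \<Sum>\<^sub>x\<^sub>y \<Phi>\<^sub>x\<^sub>y f\<^sub>x f\<^sub>y\<close>, nonnegative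
  everywhere, with \<open>\<Sum>\<^sub>i \<gamma>\<^sub>i + \<beta> D < 0\<close>: a dual certificate beating \<open>D\<close> when \<open>\<beta> < 0\<close>.\<close>

lemma separation_certificate:
  fixes \<Phi> :: "'x::finite \<Rightarrow> 'y::finite \<Rightarrow> real"
  assumes H: "\<And>K w. (\<And>i. (\<Sum>k<K. (w i k)^2) = 1) \<Longrightarrow> vector_bias \<Phi> K w \<le> \<xi>"
    and D: "\<xi> < D"
  obtains \<gamma> :: "'x + 'y \<Rightarrow> real" and \<beta> :: real
  where "\<And>f. 0 \<le> (\<Sum>i\<in>UNIV. \<gamma> i * (f i)^2) + \<beta> * (\<Sum>x\<in>UNIV. \<Sum>y\<in>UNIV. \<Phi> x y * f (Inl x) * f (Inr y))"
    and "(\<Sum>i\<in>UNIV. \<gamma> i) + \<beta> * D < 0"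
proof -
  define C where "C = convex hull (moment_vec \<Phi> ` sphere (0::real^('x+'y)) 1)"
  have "closed C" unfolding C_def
    by (intro compact_imp_closed compact_convex_hull compact_continuous_image compact_sphere
        continuous_on_subset[OF continuous_on_moment_vec]) simp
  moreover have "(moment_target D :: real^(('x + 'y) option)) \<notin> C"
    unfolding C_def by (rule moment_target_notin_hull[OF H D])
  ultimately obtain a b where ab: "inner a (moment_target D :: real^(('x + 'y) option)) < b"
    and abC: "\<forall>x\<in>C. b < inner a x"
    using separating_hyperplane_closed_point[of C] unfolding C_def by (meson convex_convex_hull)
  define \<gamma> where "\<gamma> i = vec_nth a (Some i) - b" for i
  define \<beta> where "\<beta> = vec_nth a None"
  show ?thesis
  proof
    fix f :: "'x + 'y \<Rightarrow> real"
    have "b < inner a (moment_vec \<Phi> w)" if "w \<in> sphere (0::real^('x+'y)) 1" for w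
      using abC that unfolding C_def by (meson hull_inc image_eqI)
    then show "0 \<le> (\<Sum>i\<in>UNIV. \<gamma> i * (f i)^2) + \<beta> * (\<Sum>x\<in>UNIV. \<Sum>y\<in>UNIV. \<Phi> x y * f (Inl x) * f (Inr y))"
      unfolding \<gamma>_def \<beta>_def by (rule separation_quadratic_nonneg)
  next
    define N where "N = real CARD('x + 'y)"
    have N: "0 < N" unfolding N_def of_nat_0_less_iff by (rule finite_UNIV_card_ge_0) simp
    have "inner a (moment_target D :: real^(('x + 'y) option)) = (\<beta> * D + (\<Sum>i\<in>UNIV. vec_nth a (Some i))) / N"
      unfolding inner_vec_def moment_target_def \<beta>_def N_def
      by (simp add: sum_UNIV_option sum_divide_distrib add_divide_distrib)
    then have "\<beta> * D + (\<Sum>i\<in>UNIV. vec_nth a (Some i)) < N * b"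
      using ab N by (simp add: divide_less_eq mult.commute)
    moreover have "(\<Sum>i\<in>UNIV. \<gamma> i) = (\<Sum>i\<in>UNIV. vec_nth a (Some i)) - N * b"
      unfolding \<gamma>_def N_def by (simp add: sum_subtractf)
    ultimately show "(\<Sum>i\<in>UNIV. \<gamma> i) + \<beta> * D < 0" by simp
  qed
qed

definition sign_vec :: "real \<Rightarrow> 'x + 'y \<Rightarrow> real" where
  "sign_vec \<sigma> i = (case i of Inl _ \<Rightarrow> 1 | Inr _ \<Rightarrow> \<sigma>)"

lemma sign_vec_cross:
  "(\<Sum>x\<in>UNIV. \<Sum>y\<in>UNIV. \<Phi> x y * sign_vec \<sigma> (Inl x) * sign_vec \<sigma> (Inr y))
   = \<sigma> * (\<Sum>x\<in>UNIV. \<Sum>y\<in>UNIV. \<Phi> x y)"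
  unfolding sign_vec_def by (simp add: sum_distrib_left mult_ac)

lemma vector_bias_sign_vec:
  "vector_bias \<Phi> 1 (\<lambda>i k. sign_vec \<sigma> i) = \<sigma> * (\<Sum>x\<in>UNIV. \<Sum>y\<in>UNIV. \<Phi> x y)"
  unfolding vector_bias_def sign_vec_def by (simp add: sum_distrib_left mult_ac)

lemma sign_vec_square: "\<sigma> = 1 \<or> \<sigma> = -1 \<Longrightarrow> (sign_vec \<sigma> i)^2 = 1"
  unfolding sign_vec_def by (cases i) auto

lemma vector_bound_nonneg:
  fixes \<Phi> :: "'x::finite \<Rightarrow> 'y::finite \<Rightarrow> real"
  assumes H: "\<And>K w. (\<And>i. (\<Sum>k<K. (w i k)^2) = 1) \<Longrightarrow> vector_bias \<Phi> K w \<le> \<xi>"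
  shows "0 \<le> \<xi>"
proof -
  have "\<sigma> * (\<Sum>x\<in>UNIV. \<Sum>y\<in>UNIV. \<Phi> x y) \<le> \<xi>" if "\<sigma> = 1 \<or> \<sigma> = -1" for \<sigma>
  proof -
    have "vector_bias \<Phi> 1 (\<lambda>i k. sign_vec \<sigma> i) \<le> \<xi>"
      by (rule H) (simp add: sign_vec_square[OF that])
    then show ?thesis by (simp only: vector_bias_sign_vec)
  qed
  from this[of 1] this[of "-1"] show ?thesis by simp
qed

lemma certificate_sum_nonneg:
  fixes \<Phi> :: "'x::finite \<Rightarrow> 'y::finite \<Rightarrow> real"
  assumes Q: "\<And>f. 0 \<le> (\<Sum>i\<in>UNIV. \<gamma> i * (f i)^2) + \<beta> * (\<Sum>x\<in>UNIV. \<Sum>y\<in>UNIV. \<Phi> x y * f (Inl x) * f (Inr y))"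
    and "0 \<le> \<beta>"
  shows "0 \<le> (\<Sum>i\<in>UNIV. \<gamma> i)"
proof -
  define \<sigma> :: real where "\<sigma> = (if 0 \<le> (\<Sum>x\<in>UNIV. \<Sum>y\<in>UNIV. \<Phi> x y) then -1 else 1)"
  have \<sigma>: "\<sigma> = 1 \<or> \<sigma> = -1" unfolding \<sigma>_def by simp
  have "\<beta> * (\<sigma> * (\<Sum>x\<in>UNIV. \<Sum>y\<in>UNIV. \<Phi> x y)) \<le> 0"
    using \<open>0 \<le> \<beta>\<close> unfolding \<sigma>_def by (auto simp: mult_nonneg_nonpos)
  then show ?thesis
    using Q[of "sign_vec \<sigma>"] by (simp add: sign_vec_cross sign_vec_square[OF \<sigma>])
qed

lemma certificate_dual_feasible:
  fixes \<Phi> :: "'x::finite \<Rightarrow> 'y::finite \<Rightarrow> real"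
  assumes Q: "\<And>f. 0 \<le> (\<Sum>i\<in>UNIV. \<gamma> i * (f i)^2) + \<beta> * (\<Sum>x\<in>UNIV. \<Sum>y\<in>UNIV. \<Phi> x y * f (Inl x) * f (Inr y))"
    and neg: "\<beta> < 0"
  shows "dual_feasible \<Phi> (\<lambda>i. 2 * \<gamma> i / (- \<beta>))"
  unfolding dual_feasible_iff
proof (intro allI)
  fix a b
  have "0 \<le> (\<Sum>i\<in>UNIV. \<gamma> i * (case_sum a b i)^2)
      + \<beta> * (\<Sum>x\<in>UNIV. \<Sum>y\<in>UNIV. \<Phi> x y * case_sum a b (Inl x) * case_sum a b (Inr y))"
    by (rule Q)
  also have "\<dots> = (- \<beta>) * dual_form \<Phi> (\<lambda>i. 2 * \<gamma> i / (- \<beta>)) a b"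
    unfolding dual_form_def sum_UNIV_Plus using neg
    by (simp add: algebra_simps sum_distrib_left sum_negf)
  finally show "0 \<le> dual_form \<Phi> (\<lambda>i. 2 * \<gamma> i / (- \<beta>)) a b" using neg by (simp add: mult_le_0_iff)
qed

lemma dual_obj_le_vector_bound:
  fixes \<Phi> :: "'x::finite \<Rightarrow> 'y::finite \<Rightarrow> real"
  assumes O: "dual_optimal \<Phi> lam"
    and H: "\<And>K w. (\<And>i. (\<Sum>k<K. (w i k)^2) = 1) \<Longrightarrow> vector_bias \<Phi> K w \<le> \<xi>"
  shows "dual_obj lam \<le> \<xi>"
proof (rule ccontr)
  assume "\<not> dual_obj lam \<le> \<xi>"
  define D where "D = (\<xi> + dual_obj lam) / 2"
  have D: "\<xi> < D" "D < dual_obj lam" unfolding D_def using \<open>\<not> dual_obj lam \<le> \<xi>\<close> by simp_all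
  obtain \<gamma> \<beta> where Q: "\<And>f. 0 \<le> (\<Sum>i\<in>UNIV. \<gamma> i * (f i)^2) + \<beta> * (\<Sum>x\<in>UNIV. \<Sum>y\<in>UNIV. \<Phi> x y * f (Inl x) * f (Inr y))"
    and neg: "(\<Sum>i\<in>UNIV. \<gamma> i) + \<beta> * D < 0"
    using separation_certificate[OF H D(1)] by blast
  show False
  proof (cases "\<beta> < 0")
    case True
    have "dual_obj lam \<le> dual_obj (\<lambda>i. 2 * \<gamma> i / (- \<beta>))"
      using O certificate_dual_feasible[OF Q True] unfolding dual_optimal_def by blast
    also have "\<dots> = (\<Sum>i\<in>UNIV. \<gamma> i) / (- \<beta>)"
      unfolding dual_obj_def by (simp only: sum_divide_distrib[symmetric] sum_distrib_left[symmetric]) simp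
    also have "\<dots> < D"
    proof -
      have "(\<Sum>i\<in>UNIV. \<gamma> i) < D * (- \<beta>)" using neg by (simp add: algebra_simps)
      then show ?thesis using pos_divide_less_eq[of "- \<beta>"] True by simp
    qed
    finally show False using D(2) by simp
  next
    case False
    then have "0 \<le> (\<Sum>i\<in>UNIV. \<gamma> i)" by (intro certificate_sum_nonneg[OF Q]) simp
    moreover have "0 \<le> \<beta> * D" using False D(1) vector_bound_nonneg[OF H] by simp
    ultimately show False using neg by simp
  qed
qed

lemma xi_q_eq_dual_obj:
  fixes \<Phi> :: "'x::finite \<Rightarrow> 'y::finite \<Rightarrow> real"
  assumes O: "dual_optimal \<Phi> lam"
  shows "xi_q \<Phi> = dual_obj lam"
proof -
  have F: "dual_feasible \<Phi> lam" using O dual_optimal_def by blast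
  define BS where "BS = {quantum_bias \<Phi> dA dB \<psi> A B | dA dB \<psi> A B. quantum_strategy dA dB \<psi> A B}"
  have bdd: "\<And>b. b \<in> BS \<Longrightarrow> b \<le> dual_obj lam"
    unfolding BS_def using quantum_bias_le_dual_obj[OF F] by blast
  have inBS: "vector_bias \<Phi> K w \<in> BS" if "\<And>i. (\<Sum>k<K. (w i k)^2) = 1" for K w
  proof -
    have "quantum_strategy (2^K) (2^K) (max_entangled (2^K)) (\<lambda>x. jw_obs K (w (Inl x))) (\<lambda>y. jw_obs K (w (Inr y)))
      \<and> quantum_bias \<Phi> (2^K) (2^K) (max_entangled (2^K)) (\<lambda>x. jw_obs K (w (Inl x))) (\<lambda>y. jw_obs K (w (Inr y)))
        = vector_bias \<Phi> K w"
      unfolding vector_bias_def by (rule jw_strategy) (rule that)+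
    then show ?thesis unfolding BS_def mem_Collect_eq
      by (intro exI[of _ "2^K"] exI[of _ "max_entangled (2^K)"]
          exI[of _ "\<lambda>x. jw_obs K (w (Inl x))"] exI[of _ "\<lambda>y. jw_obs K (w (Inr y))"]) auto
  qed
  have "BS \<noteq> {}" using inBS[where K=1 and w="\<lambda>i k. 1"] by auto
  then have "Sup BS \<le> dual_obj lam" using bdd by (rule cSup_least)
  moreover have "dual_obj lam \<le> Sup BS"
  proof (rule dual_obj_le_vector_bound[OF O])
    fix K :: nat and w :: "'x + 'y \<Rightarrow> nat \<Rightarrow> real"
    assume "\<And>i. (\<Sum>k<K. (w i k)^2) = 1"
    then show "vector_bias \<Phi> K w \<le> Sup BS"
      using inBS bdd by (meson bdd_aboveI cSup_upper)
  qed
  ultimately show ?thesis unfolding xi_q_def BS_def[symmetric] by simp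
qed

section \<open>The sum-of-squares decomposition\<close>

lemma herm_mat_msum_real: assumes "\<And>s. s \<in> S \<Longrightarrow> herm_mat n (H s)"
  shows "herm_mat n (msum n S (\<lambda>s. complex_of_real (r s) \<cdot>\<^sub>m H s))"
  unfolding herm_mat_def
proof (intro conjI allI impI msum_carrier)
  fix i j assume i: "i < n" and j: "j < n"
  have "(\<Sum>s\<in>S. (complex_of_real (r s) \<cdot>\<^sub>m H s) $$ (i, j)) = (\<Sum>s\<in>S. cnj ((complex_of_real (r s) \<cdot>\<^sub>m H s) $$ (j, i)))"
  proof (rule sum.cong[OF refl])
    fix s assume s: "s \<in> S"
    have h1: "H s $$ (i,j) = cnj (H s $$ (j,i))" using assms[OF s] i j unfolding herm_mat_def by blast
    have h2: "H s \<in> carrier_mat n n" using assms[OF s] unfolding herm_mat_def by blast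
    note h1 h2
    then show "(complex_of_real (r s) \<cdot>\<^sub>m H s) $$ (i, j) = cnj ((complex_of_real (r s) \<cdot>\<^sub>m H s) $$ (j, i))"
      using i j by simp
  qed
  then show "msum n S (\<lambda>s. complex_of_real (r s) \<cdot>\<^sub>m H s) $$ (i, j) = cnj (msum n S (\<lambda>s. complex_of_real (r s) \<cdot>\<^sub>m H s) $$ (j, i))"
    using i j by simp
qed

lemma herm_mat_msum_pairs: assumes H: "\<And>y. herm_mat n (B y)" and sym: "\<And>y y'. c y y' = c y' y"
  shows "herm_mat n (msum n (UNIV :: ('y::finite \<times> 'y) set) (\<lambda>(y, y'). complex_of_real (c y y') \<cdot>\<^sub>m (B y * B y')))"
  unfolding herm_mat_def
proof (intro conjI allI impI msum_carrier)
  fix i j assume i: "i < n" and j: "j < n"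
  have BC: "B y \<in> carrier_mat n n" for y using H unfolding herm_mat_def by blast
  have BD: "dim_row (B y) = n" "dim_col (B y) = n" for y using BC[of y] by auto
  have Bh: "B y $$ (a,b) = cnj (B y $$ (b,a))" if "a < n" "b < n" for y a b using H that unfolding herm_mat_def by blast
  have prod: "(B y * B y') $$ (i,j) = cnj ((B y' * B y) $$ (j,i))" for y y'
  proof -
    have "(B y * B y') $$ (i,j) = (\<Sum>k<n. B y $$ (i,k) * B y' $$ (k,j))"
      using BC[of y] BC[of y'] i j by (simp add: scalar_prod_def atLeast0LessThan)
    also have "\<dots> = (\<Sum>k<n. cnj (B y' $$ (j,k) * B y $$ (k,i)))"
      using i j by (intro sum.cong refl) (simp add: Bh[of i] Bh[of _ j] mult.commute)
    also have "\<dots> = cnj ((B y' * B y) $$ (j,i))"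
      using BC[of y] BC[of y'] i j by (simp add: scalar_prod_def atLeast0LessThan)
    finally show ?thesis .
  qed
  have "msum n UNIV (\<lambda>(y, y'). complex_of_real (c y y') \<cdot>\<^sub>m (B y * B y')) $$ (i,j)
      = (\<Sum>y\<in>UNIV. \<Sum>y'\<in>UNIV. complex_of_real (c y y') * (B y * B y') $$ (i,j))"
    using i j BD by (simp add: sum_UNIV_prod_case[symmetric] split_def)
  also have "\<dots> = (\<Sum>y\<in>UNIV. \<Sum>y'\<in>UNIV. cnj (complex_of_real (c y' y) * (B y' * B y) $$ (j,i)))"
  proof (intro sum.cong refl)
    fix y y'
    show "complex_of_real (c y y') * (B y * B y') $$ (i,j) = cnj (complex_of_real (c y' y) * (B y' * B y) $$ (j,i))"
      unfolding prod[of y y'] sym[of y y'] by simp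
  qed
  also have "\<dots> = (\<Sum>y'\<in>UNIV. \<Sum>y\<in>UNIV. cnj (complex_of_real (c y' y) * (B y' * B y) $$ (j,i)))"
    by (rule sum.swap)
  also have "\<dots> = cnj (msum n UNIV (\<lambda>(y, y'). complex_of_real (c y y') \<cdot>\<^sub>m (B y * B y')) $$ (j,i))"
    using i j BD by (simp add: sum_UNIV_prod_case[symmetric] split_def)
  finally show "msum n UNIV (\<lambda>(y, y'). complex_of_real (c y y') \<cdot>\<^sub>m (B y * B y')) $$ (i,j) =
     cnj (msum n UNIV (\<lambda>(y, y'). complex_of_real (c y y') \<cdot>\<^sub>m (B y * B y')) $$ (j,i))" .
qed

lemma quadratic_form_eq_sum_squares:
  fixes \<Phi> :: "'x::finite \<Rightarrow> 'y::finite \<Rightarrow> real"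
  shows "(\<Sum>y\<in>UNIV. \<Sum>y'\<in>UNIV. (\<Sum>x\<in>UNIV. \<Phi> x y * \<Phi> x y' / l x) * (r y * r y')) =
    (\<Sum>x\<in>UNIV. (\<Sum>y\<in>UNIV. \<Phi> x y * r y)^2 / l x)"
proof -
  have "(\<Sum>y\<in>UNIV. \<Sum>y'\<in>UNIV. (\<Sum>x\<in>UNIV. \<Phi> x y * \<Phi> x y' / l x) * (r y * r y')) =
     (\<Sum>y\<in>UNIV. \<Sum>y'\<in>UNIV. \<Sum>x\<in>UNIV. (\<Phi> x y * r y) * (\<Phi> x y' * r y') / l x)"
  proof (intro sum.cong refl)
    fix y y'
    show "(\<Sum>x\<in>UNIV. \<Phi> x y * \<Phi> x y' / l x) * (r y * r y') = (\<Sum>x\<in>UNIV. (\<Phi> x y * r y) * (\<Phi> x y' * r y') / l x)"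
      unfolding sum_distrib_right by (rule sum.cong[OF refl]) (simp add: mult_ac)
  qed
  also have "\<dots> = (\<Sum>x\<in>UNIV. \<Sum>y\<in>UNIV. \<Sum>y'\<in>UNIV. (\<Phi> x y * r y) * (\<Phi> x y' * r y') / l x)"
    by (simp only: sum.swap[where A="UNIV::'y set" and B="UNIV::'x set"])
  also have "\<dots> = (\<Sum>x\<in>UNIV. (\<Sum>y\<in>UNIV. \<Phi> x y * r y)^2 / l x)"
    by (simp add: power2_eq_square sum_product sum_divide_distrib)
  finally show ?thesis .
qed

lemma herm_mat_Pop:
  assumes "\<And>y. herm_mat n (B y)"
  shows "herm_mat n (Pop \<Phi> lam \<xi> n B)"
proof -
  define M where "M = msum n UNIV (\<lambda>x. complex_of_real (1 / lam (Inl x)) \<cdot>\<^sub>m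
      msum n UNIV (\<lambda>(y, y'). complex_of_real (\<Phi> x y * \<Phi> x y') \<cdot>\<^sub>m (B y * B y')))"
  have hM: "herm_mat n M"
    unfolding M_def by (rule herm_mat_msum_real) (rule herm_mat_msum_pairs[OF assms], simp)
  then have M: "M \<in> carrier_mat n n" unfolding herm_mat_def by blast
  show ?thesis
    unfolding herm_mat_def Pop_def M_def[symmetric]
  proof (intro conjI allI impI)
    show "(1/2 :: complex) \<cdot>\<^sub>m (complex_of_real \<xi> \<cdot>\<^sub>m 1\<^sub>m n - M) \<in> carrier_mat n n"
      using M by (metis minus_carrier_mat smult_carrier_mat)
    fix i j assume i: "i < n" and j: "j < n"
    have "M $$ (i,j) = cnj (M $$ (j,i))" using hM i j unfolding herm_mat_def by blast
    then show "((1/2 :: complex) \<cdot>\<^sub>m (complex_of_real \<xi> \<cdot>\<^sub>m 1\<^sub>m n - M)) $$ (i, j) =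
       cnj (((1/2 :: complex) \<cdot>\<^sub>m (complex_of_real \<xi> \<cdot>\<^sub>m 1\<^sub>m n - M)) $$ (j, i))"
      using i j M by auto
  qed
qed

lemma cinner_msum_products:
  fixes B :: "'y::finite \<Rightarrow> complex mat"
  assumes hB: "\<And>y. herm_mat n (B y)" and v: "v \<in> carrier_vec n"
  shows "cinner v (msum n UNIV (\<lambda>(y, y'). complex_of_real (c y y') \<cdot>\<^sub>m (B y * B y')) *\<^sub>v v)
    = (\<Sum>y\<in>UNIV. \<Sum>y'\<in>UNIV. complex_of_real (c y y') * cinner (B y *\<^sub>v v) (B y' *\<^sub>v v))"
proof -
  have BC: "B y \<in> carrier_mat n n" for y using hB unfolding herm_mat_def by blast
  have PC: "B y * B y' \<in> carrier_mat n n" for y y' using BC[of y] BC[of y'] by simp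
  have BBv: "cinner v ((B y * B y') *\<^sub>v v) = cinner (B y *\<^sub>v v) (B y' *\<^sub>v v)" for y y'
  proof -
    have "(B y * B y') *\<^sub>v v = B y *\<^sub>v (B y' *\<^sub>v v)" using BC[of y] BC[of y'] v by (metis assoc_mult_mat_vec)
    then show ?thesis using cinner_herm_mat[OF hB[of y], of "B y' *\<^sub>v v" v] BC[of y'] v by simp
  qed
  have "cinner v (msum n UNIV (\<lambda>(y, y'). complex_of_real (c y y') \<cdot>\<^sub>m (B y * B y')) *\<^sub>v v)
      = (\<Sum>p\<in>UNIV. cinner v ((\<lambda>(y, y'). complex_of_real (c y y') \<cdot>\<^sub>m (B y * B y')) p *\<^sub>v v))"
    by (rule cinner_msum) (use PC v in \<open>auto split: prod.splits\<close>)
  also have "\<dots> = (\<Sum>p\<in>UNIV. case p of (y, y') \<Rightarrow> complex_of_real (c y y') * cinner (B y *\<^sub>v v) (B y' *\<^sub>v v))"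
  proof (rule sum.cong[OF refl])
    fix p :: "'y \<times> 'y"
    obtain y y' where p: "p = (y, y')" by fastforce
    show "cinner v ((\<lambda>(y, y'). complex_of_real (c y y') \<cdot>\<^sub>m (B y * B y')) p *\<^sub>v v) =
      (case p of (y, y') \<Rightarrow> complex_of_real (c y y') * cinner (B y *\<^sub>v v) (B y' *\<^sub>v v))"
      unfolding p using cinner_smult_mat[OF PC[of y y'] v v] BBv[of y y'] by simp
  qed
  finally show ?thesis by (simp only: sum_UNIV_prod_case)
qed

lemma Re_cinner_Pop:
  fixes \<Phi> :: "'x::finite \<Rightarrow> 'y::finite \<Rightarrow> real"
  assumes hB: "\<And>y. herm_mat n (B y)" and v: "v \<in> carrier_vec n"
  shows "Re (cinner v (Pop \<Phi> lam \<xi> n B *\<^sub>v v)) = (\<xi> * Re (cinner v v)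
     - (\<Sum>y\<in>UNIV. \<Sum>y'\<in>UNIV. (\<Sum>x\<in>UNIV. \<Phi> x y * \<Phi> x y' / lam (Inl x))
          * Re (cinner (B y *\<^sub>v v) (B y' *\<^sub>v v)))) / 2"
proof -
  define Mi where "Mi x = msum n (UNIV :: ('y \<times> 'y) set) (\<lambda>(y, y'). complex_of_real (\<Phi> x y * \<Phi> x y') \<cdot>\<^sub>m (B y * B y'))" for x
  define M where "M = msum n UNIV (\<lambda>x. complex_of_real (1 / lam (Inl x)) \<cdot>\<^sub>m Mi x)"
  have MiC: "Mi x \<in> carrier_mat n n" for x unfolding Mi_def by simp
  have MC: "M \<in> carrier_mat n n" unfolding M_def by simp
  have "cinner v (M *\<^sub>v v) = (\<Sum>x\<in>UNIV. cinner v ((complex_of_real (1 / lam (Inl x)) \<cdot>\<^sub>m Mi x) *\<^sub>v v))"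
    unfolding M_def by (rule cinner_msum) (use MiC v in auto)
  also have "\<dots> = (\<Sum>x\<in>UNIV. complex_of_real (1 / lam (Inl x)) * cinner v (Mi x *\<^sub>v v))"
    by (intro sum.cong refl) (rule cinner_smult_mat[OF MiC v v])
  finally have "Re (cinner v (M *\<^sub>v v)) = (\<Sum>x\<in>UNIV. \<Sum>y\<in>UNIV. \<Sum>y'\<in>UNIV.
      \<Phi> x y * \<Phi> x y' / lam (Inl x) * Re (cinner (B y *\<^sub>v v) (B y' *\<^sub>v v)))"
    unfolding Mi_def cinner_msum_products[OF hB v] by (simp add: sum_distrib_left mult_ac)
  also have "\<dots> = (\<Sum>y\<in>UNIV. \<Sum>y'\<in>UNIV. (\<Sum>x\<in>UNIV. \<Phi> x y * \<Phi> x y' / lam (Inl x))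
      * Re (cinner (B y *\<^sub>v v) (B y' *\<^sub>v v)))"
    by (simp only: sum.swap[where A="UNIV::'x set" and B="UNIV::'y set"] sum_distrib_right)
  finally have ReM: "Re (cinner v (M *\<^sub>v v)) = \<dots>" .
  have XC: "complex_of_real \<xi> \<cdot>\<^sub>m 1\<^sub>m n - M \<in> carrier_mat n n" using MC by (metis minus_carrier_mat)
  have "cinner v (Pop \<Phi> lam \<xi> n B *\<^sub>v v) = (1/2) * cinner v ((complex_of_real \<xi> \<cdot>\<^sub>m 1\<^sub>m n - M) *\<^sub>v v)"
    unfolding Pop_def Mi_def[symmetric] M_def[symmetric] by (rule cinner_smult_mat[OF XC v v])
  also have "\<dots> = (1/2) * (complex_of_real \<xi> * cinner v v - cinner v (M *\<^sub>v v))"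
    using cinner_minus_mat[of "complex_of_real \<xi> \<cdot>\<^sub>m 1\<^sub>m n" n M v v] cinner_smult_mat[of "1\<^sub>m n" n v v "complex_of_real \<xi>"] MC v
    by simp
  finally have "Re (cinner v (Pop \<Phi> lam \<xi> n B *\<^sub>v v))
      = Re ((1/2) * (complex_of_real \<xi> * cinner v v - cinner v (M *\<^sub>v v)))"
    by (rule arg_cong)
  also have "\<dots> = (\<xi> * Re (cinner v v) - Re (cinner v (M *\<^sub>v v))) / 2"
    by (simp add: Re_divide_numeral)
  finally show ?thesis unfolding ReM .
qed

text \<open>Apply the real inequality to the real and the imaginary parts of each coordinate.\<close>

lemma Re_cinner_quadratic_bound:
  fixes q :: "'y::finite \<Rightarrow> complex Matrix.vec" and a :: "'y \<Rightarrow> 'y \<Rightarrow> real"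
  assumes bound: "\<And>r. (\<Sum>y\<in>UNIV. \<Sum>y'\<in>UNIV. a y y' * (r y * r y')) \<le> (\<Sum>y\<in>UNIV. c y * (r y)^2)"
    and q: "\<And>y. dim_vec (q y) = n"
  shows "(\<Sum>y\<in>UNIV. \<Sum>y'\<in>UNIV. a y y' * Re (cinner (q y) (q y'))) \<le> (\<Sum>y\<in>UNIV. c y * Re (cinner (q y) (q y)))"
proof -
  have "(\<Sum>y\<in>UNIV. \<Sum>y'\<in>UNIV. a y y' * Re (cinner (q y) (q y'))) =
     (\<Sum>y\<in>UNIV. \<Sum>y'\<in>UNIV. \<Sum>k<n. a y y' * (Re (q y $ k) * Re (q y' $ k)) + a y y' * (Im (q y $ k) * Im (q y' $ k)))"
    unfolding Re_cinner[OF q] by (simp add: sum_distrib_left algebra_simps)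
  also have "\<dots> = (\<Sum>k<n. (\<Sum>y\<in>UNIV. \<Sum>y'\<in>UNIV. a y y' * (Re (q y $ k) * Re (q y' $ k)))
          + (\<Sum>y\<in>UNIV. \<Sum>y'\<in>UNIV. a y y' * (Im (q y $ k) * Im (q y' $ k))))"
    by (simp only: sum.swap[where B="{..<n}"] sum.distrib)
  also have "\<dots> \<le> (\<Sum>k<n. (\<Sum>y\<in>UNIV. c y * (Re (q y $ k))^2) + (\<Sum>y\<in>UNIV. c y * (Im (q y $ k))^2))"
    by (intro sum_mono add_mono bound)
  also have "\<dots> = (\<Sum>y\<in>UNIV. c y * Re (cinner (q y) (q y)))"
    unfolding Re_cinner[OF q]
    by (simp add: sum_distrib_left sum.distrib[symmetric] sum.swap[where A="{..<n}"] power2_eq_square algebra_simps)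
  finally show ?thesis .
qed

lemma Pop_psd:
  fixes \<Phi> :: "'x::finite \<Rightarrow> 'y::finite \<Rightarrow> real"
  assumes F: "dual_feasible \<Phi> lam" and pos: "\<And>x. 0 < lam (Inl x)"
    and xi: "\<xi> = (\<Sum>y\<in>UNIV. lam (Inr y))" and obs: "\<And>y. obs_mat n (B y)"
  shows "psd_mat n (Pop \<Phi> lam \<xi> n B)"
  unfolding psd_mat_def
proof (intro conjI ballI)
  have hB: "herm_mat n (B y)" for y using obs unfolding obs_mat_def by blast
  then show hP: "herm_mat n (Pop \<Phi> lam \<xi> n B)" by (rule herm_mat_Pop)
  fix v :: "complex Matrix.vec" assume v: "v \<in> carrier_vec n"
  show "Im (cinner v (Pop \<Phi> lam \<xi> n B *\<^sub>v v)) = 0" by (rule Im_cinner_herm_mat[OF hP v])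
  have BC: "B y \<in> carrier_mat n n" for y using hB unfolding herm_mat_def by blast
  have "(\<Sum>y\<in>UNIV. \<Sum>y'\<in>UNIV. (\<Sum>x\<in>UNIV. \<Phi> x y * \<Phi> x y' / lam (Inl x)) * (r y * r y'))
      \<le> (\<Sum>y\<in>UNIV. lam (Inr y) * (r y)^2)" for r
    unfolding quadratic_form_eq_sum_squares using dual_feasible_Schur[OF F pos] .
  then have "(\<Sum>y\<in>UNIV. \<Sum>y'\<in>UNIV. (\<Sum>x\<in>UNIV. \<Phi> x y * \<Phi> x y' / lam (Inl x))
        * Re (cinner (B y *\<^sub>v v) (B y' *\<^sub>v v)))
      \<le> (\<Sum>y\<in>UNIV. lam (Inr y) * Re (cinner (B y *\<^sub>v v) (B y *\<^sub>v v)))"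
    by (rule Re_cinner_quadratic_bound) (simp add: carrier_matD[OF BC])
  also have "\<dots> = \<xi> * Re (cinner v v)"
    unfolding cinner_obs_mat[OF obs v] xi by (simp add: sum_distrib_right)
  finally show "0 \<le> Re (cinner v (Pop \<Phi> lam \<xi> n B *\<^sub>v v))"
    unfolding Re_cinner_Pop[OF hB v] by simp
qed

lemma index_square_sub_msum:
  fixes f :: "'y::finite \<Rightarrow> complex"
  assumes AC: "A \<in> carrier_mat n n" and BC: "\<And>y. B y \<in> carrier_mat n n"
    and i: "i < n" and j: "j < n"
  shows "((A - msum n UNIV (\<lambda>y. f y \<cdot>\<^sub>m B y)) * (A - msum n UNIV (\<lambda>y. f y \<cdot>\<^sub>m B y))) $$ (i,j)
    = (A * A) $$ (i,j) - (\<Sum>y\<in>UNIV. f y * (A * B y) $$ (i,j)) - (\<Sum>y\<in>UNIV. f y * (B y * A) $$ (i,j))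
      + (\<Sum>y\<in>UNIV. \<Sum>y'\<in>UNIV. f y * f y' * (B y * B y') $$ (i,j))"
proof -
  let ?C = "msum n UNIV (\<lambda>y. f y \<cdot>\<^sub>m B y)"
  have DC: "A - ?C \<in> carrier_mat n n" by (metis minus_carrier_mat msum_carrier)
  have Dent: "(A - ?C) $$ (k,l) = A $$ (k,l) - (\<Sum>y\<in>UNIV. f y * B y $$ (k,l))" if "k < n" "l < n" for k l
  proof -
    have BD: "dim_row (B y) = n" "dim_col (B y) = n" for y using BC[of y] by auto
    show ?thesis using that AC BD by simp
  qed
  have "((A - ?C) * (A - ?C)) $$ (i,j) = (\<Sum>k<n. (A - ?C) $$ (i,k) * (A - ?C) $$ (k,j))"
    by (rule index_mult_mat_square[OF DC DC i j])
  also have "\<dots> = (\<Sum>k<n. (A $$ (i,k) - (\<Sum>y\<in>UNIV. f y * B y $$ (i,k))) * (A $$ (k,j) - (\<Sum>y\<in>UNIV. f y * B y $$ (k,j))))"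
  proof (rule sum.cong[OF refl])
    fix k assume "k \<in> {..<n}"
    then have k: "k < n" by simp
    show "(A - ?C) $$ (i,k) * (A - ?C) $$ (k,j) = (A $$ (i,k) - (\<Sum>y\<in>UNIV. f y * B y $$ (i,k))) * (A $$ (k,j) - (\<Sum>y\<in>UNIV. f y * B y $$ (k,j)))"
      by (simp only: Dent[OF i k] Dent[OF k j])
  qed
  also have "\<dots> = (\<Sum>k<n. A $$ (i,k) * A $$ (k,j)) - (\<Sum>k<n. A $$ (i,k) * (\<Sum>y\<in>UNIV. f y * B y $$ (k,j)))
      - (\<Sum>k<n. (\<Sum>y\<in>UNIV. f y * B y $$ (i,k)) * A $$ (k,j)) + (\<Sum>k<n. (\<Sum>y\<in>UNIV. f y * B y $$ (i,k)) * (\<Sum>y\<in>UNIV. f y * B y $$ (k,j)))"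
    by (simp add: sum_subtractf[symmetric] sum.distrib[symmetric] algebra_simps)
  also have "(\<Sum>k<n. A $$ (i,k) * A $$ (k,j)) = (A * A) $$ (i,j)" by (rule index_mult_mat_square[OF AC AC i j, symmetric])
  also have "(\<Sum>k<n. A $$ (i,k) * (\<Sum>y\<in>UNIV. f y * B y $$ (k,j))) = (\<Sum>y\<in>UNIV. f y * (A * B y) $$ (i,j))"
  proof -
    have "(\<Sum>k<n. A $$ (i,k) * (\<Sum>y\<in>UNIV. f y * B y $$ (k,j))) = (\<Sum>k<n. \<Sum>y\<in>UNIV. f y * (A $$ (i,k) * B y $$ (k,j)))"
      by (simp add: sum_distrib_left mult_ac)
    also have "\<dots> = (\<Sum>y\<in>UNIV. \<Sum>k<n. f y * (A $$ (i,k) * B y $$ (k,j)))" by (rule sum.swap)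
    also have "\<dots> = (\<Sum>y\<in>UNIV. f y * (A * B y) $$ (i,j))"
      by (intro sum.cong refl) (simp add: index_mult_mat_square[OF AC BC i j] sum_distrib_left)
    finally show ?thesis .
  qed
  also have "(\<Sum>k<n. (\<Sum>y\<in>UNIV. f y * B y $$ (i,k)) * A $$ (k,j)) = (\<Sum>y\<in>UNIV. f y * (B y * A) $$ (i,j))"
  proof -
    have "(\<Sum>k<n. (\<Sum>y\<in>UNIV. f y * B y $$ (i,k)) * A $$ (k,j)) = (\<Sum>k<n. \<Sum>y\<in>UNIV. f y * (B y $$ (i,k) * A $$ (k,j)))"
      by (intro sum.cong refl) (simp add: sum_distrib_right sum_distrib_left mult_ac)
    also have "\<dots> = (\<Sum>y\<in>UNIV. \<Sum>k<n. f y * (B y $$ (i,k) * A $$ (k,j)))" by (rule sum.swap)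
    also have "\<dots> = (\<Sum>y\<in>UNIV. f y * (B y * A) $$ (i,j))"
      by (intro sum.cong refl) (simp add: index_mult_mat_square[OF BC AC i j] sum_distrib_left)
    finally show ?thesis .
  qed
  also have "(\<Sum>k<n. (\<Sum>y\<in>UNIV. f y * B y $$ (i,k)) * (\<Sum>y\<in>UNIV. f y * B y $$ (k,j))) =
     (\<Sum>y\<in>UNIV. \<Sum>y'\<in>UNIV. f y * f y' * (B y * B y') $$ (i,j))"
  proof -
    have "(\<Sum>k<n. (\<Sum>y\<in>UNIV. f y * B y $$ (i,k)) * (\<Sum>y\<in>UNIV. f y * B y $$ (k,j))) =
       (\<Sum>k<n. \<Sum>y\<in>UNIV. \<Sum>y'\<in>UNIV. f y * f y' * (B y $$ (i,k) * B y' $$ (k,j)))"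
      by (intro sum.cong refl) (subst sum_product, intro sum.cong refl, simp add: mult_ac)
    also have "\<dots> = (\<Sum>y\<in>UNIV. \<Sum>y'\<in>UNIV. \<Sum>k<n. f y * f y' * (B y $$ (i,k) * B y' $$ (k,j)))"
      by (simp only: sum.swap[where A="{..<n}"])
    also have "\<dots> = (\<Sum>y\<in>UNIV. \<Sum>y'\<in>UNIV. f y * f y' * (B y * B y') $$ (i,j))"
      by (intro sum.cong refl) (simp add: index_mult_mat_square[OF BC BC i j] sum_distrib_left)
    finally show ?thesis .
  qed
  finally show ?thesis .
qed

lemma index_game_op:
  fixes \<Phi> :: "'x::finite \<Rightarrow> 'y::finite \<Rightarrow> real"
  assumes A: "\<And>x. A x \<in> carrier_mat n n" and B: "\<And>y. B y \<in> carrier_mat n n"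
    and i: "i < n" and j: "j < n"
  shows "game_op \<Phi> n A B $$ (i,j) = (\<Sum>x\<in>UNIV. \<Sum>y\<in>UNIV. complex_of_real (\<Phi> x y) * (A x * B y) $$ (i,j))"
proof -
  have AD: "dim_row (A x) = n" "dim_col (A x) = n" for x using A[of x] by auto
  have BD: "dim_row (B y) = n" "dim_col (B y) = n" for y using B[of y] by auto
  have "game_op \<Phi> n A B $$ (i,j) = (\<Sum>p\<in>UNIV. (case p of (x, y) \<Rightarrow> complex_of_real (\<Phi> x y) \<cdot>\<^sub>m (A x * B y)) $$ (i,j))"
    unfolding game_op_def using i j by simp
  also have "\<dots> = (\<Sum>p\<in>UNIV. case p of (x, y) \<Rightarrow> complex_of_real (\<Phi> x y) * (A x * B y) $$ (i,j))"
    by (rule sum.cong[OF refl]) (use i j AD BD in \<open>auto split: prod.splits\<close>)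
  finally show ?thesis by (simp only: sum_UNIV_prod_case)
qed

lemma index_Pop:
  fixes \<Phi> :: "'x::finite \<Rightarrow> 'y::finite \<Rightarrow> real"
  assumes B: "\<And>y. B y \<in> carrier_mat n n" and i: "i < n" and j: "j < n"
  shows "Pop \<Phi> lam \<xi> n B $$ (i,j) = (1/2) * (complex_of_real \<xi> * (1\<^sub>m n :: complex mat) $$ (i,j)
    - (\<Sum>x\<in>UNIV. complex_of_real (1 / lam (Inl x))
         * (\<Sum>y\<in>UNIV. \<Sum>y'\<in>UNIV. complex_of_real (\<Phi> x y * \<Phi> x y') * (B y * B y') $$ (i,j))))"
proof -
  have BD: "dim_row (B y) = n" "dim_col (B y) = n" for y using B[of y] by auto
  define Mi where "Mi x = msum n (UNIV :: ('y \<times> 'y) set) (\<lambda>(y, y'). complex_of_real (\<Phi> x y * \<Phi> x y') \<cdot>\<^sub>m (B y * B y'))" for x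
  define M where "M = msum n UNIV (\<lambda>x. complex_of_real (1 / lam (Inl x)) \<cdot>\<^sub>m Mi x)"
  have Mi: "Mi x $$ (i,j) = (\<Sum>y\<in>UNIV. \<Sum>y'\<in>UNIV. complex_of_real (\<Phi> x y * \<Phi> x y') * (B y * B y') $$ (i,j))" for x
  proof -
    have "Mi x $$ (i,j) = (\<Sum>p\<in>UNIV. (case p of (y, y') \<Rightarrow> complex_of_real (\<Phi> x y * \<Phi> x y') \<cdot>\<^sub>m (B y * B y')) $$ (i,j))"
      unfolding Mi_def using i j by simp
    also have "\<dots> = (\<Sum>p\<in>UNIV. case p of (y, y') \<Rightarrow> complex_of_real (\<Phi> x y * \<Phi> x y') * (B y * B y') $$ (i,j))"
      by (rule sum.cong[OF refl]) (use i j BD in \<open>auto split: prod.splits\<close>)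
    finally show ?thesis by (simp only: sum_UNIV_prod_case)
  qed
  have "M $$ (i,j) = (\<Sum>x\<in>UNIV. complex_of_real (1 / lam (Inl x)) * Mi x $$ (i,j))"
    unfolding M_def using i j by (simp add: Mi_def)
  moreover have "M \<in> carrier_mat n n" unfolding M_def by simp
  ultimately show ?thesis
    unfolding Pop_def Mi_def[symmetric] M_def[symmetric] using i j by (simp add: Mi)
qed

lemma sos_identity:
  fixes \<Phi> :: "'x::finite \<Rightarrow> 'y::finite \<Rightarrow> real" and A :: "'x \<Rightarrow> complex mat" and B :: "'y \<Rightarrow> complex mat"
  assumes AC: "\<And>x. A x \<in> carrier_mat n n" and BC: "\<And>y. B y \<in> carrier_mat n n"
    and AA: "\<And>x. A x * A x = 1\<^sub>m n" and comm: "\<And>x y. A x * B y = B y * A x"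
    and pos: "\<And>x. 0 < lam (Inl x)" and xi: "\<xi> = (\<Sum>x\<in>UNIV. lam (Inl x))"
  shows "complex_of_real \<xi> \<cdot>\<^sub>m 1\<^sub>m n - game_op \<Phi> n A B
    = msum n UNIV (\<lambda>x. complex_of_real (lam (Inl x) / 2) \<cdot>\<^sub>m
        ((A x - msum n UNIV (\<lambda>y. complex_of_real (\<Phi> x y / lam (Inl x)) \<cdot>\<^sub>m B y))
       * (A x - msum n UNIV (\<lambda>y. complex_of_real (\<Phi> x y / lam (Inl x)) \<cdot>\<^sub>m B y))))
      + Pop \<Phi> lam \<xi> n B"
  (is "?L = ?S + ?P")
proof (rule eq_matI)
  show "dim_row ?L = dim_row (?S + ?P)" "dim_col ?L = dim_col (?S + ?P)"
    unfolding game_op_def Pop_def by simp_all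
  fix i j assume "i < dim_row (?S + ?P)" "j < dim_col (?S + ?P)"
  then have i: "i < n" and j: "j < n" by (simp_all add: Pop_def)
  define D where "D x = A x - msum n UNIV (\<lambda>y. complex_of_real (\<Phi> x y / lam (Inl x)) \<cdot>\<^sub>m B y)" for x
  define \<delta> :: complex where "\<delta> = (1\<^sub>m n :: complex mat) $$ (i,j)"
  define P where "P x y = (A x * B y) $$ (i,j)" for x y
  define Q where "Q y y' = (B y * B y') $$ (i,j)" for y y'
  have lnz: "complex_of_real (lam (Inl x)) \<noteq> 0" for x using pos[of x] by simp
  have DD: "complex_of_real (lam (Inl x) / 2) * (D x * D x) $$ (i,j) =
      complex_of_real (lam (Inl x) / 2) * \<delta> - (\<Sum>y\<in>UNIV. complex_of_real (\<Phi> x y) * P x y)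
      + (1/2) * (complex_of_real (1 / lam (Inl x)) * (\<Sum>y\<in>UNIV. \<Sum>y'\<in>UNIV. complex_of_real (\<Phi> x y * \<Phi> x y') * Q y y'))" for x
  proof -
    let ?f = "\<lambda>y. complex_of_real (\<Phi> x y / lam (Inl x))"
    have "(D x * D x) $$ (i,j) = (A x * A x) $$ (i,j) - (\<Sum>y\<in>UNIV. ?f y * (A x * B y) $$ (i,j))
        - (\<Sum>y\<in>UNIV. ?f y * (B y * A x) $$ (i,j)) + (\<Sum>y\<in>UNIV. \<Sum>y'\<in>UNIV. ?f y * ?f y' * (B y * B y') $$ (i,j))"
      unfolding D_def by (rule index_square_sub_msum[OF AC BC i j])
    also have "\<dots> = \<delta> - 2 * (\<Sum>y\<in>UNIV. ?f y * P x y) + (\<Sum>y\<in>UNIV. \<Sum>y'\<in>UNIV. ?f y * ?f y' * Q y y')"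
      unfolding AA \<delta>_def P_def Q_def comm by simp
    finally have e: "(D x * D x) $$ (i,j) = \<delta> - 2 * (\<Sum>y\<in>UNIV. ?f y * P x y) + (\<Sum>y\<in>UNIV. \<Sum>y'\<in>UNIV. ?f y * ?f y' * Q y y')" .
    have e1: "complex_of_real (lam (Inl x) / 2) * (2 * (\<Sum>y\<in>UNIV. ?f y * P x y)) = (\<Sum>y\<in>UNIV. complex_of_real (\<Phi> x y) * P x y)"
      unfolding sum_distrib_left by (intro sum.cong refl) (use lnz[of x] in \<open>simp add: field_simps\<close>)
    have e2: "complex_of_real (lam (Inl x) / 2) * (\<Sum>y\<in>UNIV. \<Sum>y'\<in>UNIV. ?f y * ?f y' * Q y y') =
        (1/2) * (complex_of_real (1 / lam (Inl x)) * (\<Sum>y\<in>UNIV. \<Sum>y'\<in>UNIV. complex_of_real (\<Phi> x y * \<Phi> x y') * Q y y'))"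
      unfolding sum_distrib_left by (intro sum.cong refl) (use lnz[of x] in \<open>simp add: field_simps\<close>)
    show ?thesis unfolding e using e1 e2 by (simp add: algebra_simps)
  qed
  have DDdim: "dim_row (D x * D x) = n" "dim_col (D x * D x) = n" for x
    unfolding D_def using AC[of x] by auto
  have Lent: "?L $$ (i,j) = complex_of_real \<xi> * \<delta> - (\<Sum>x\<in>UNIV. \<Sum>y\<in>UNIV. complex_of_real (\<Phi> x y) * P x y)"
    unfolding \<delta>_def P_def using i j index_game_op[OF AC BC i j] by (simp add: game_op_def)
  have Sent: "?S $$ (i,j) = (\<Sum>x\<in>UNIV. complex_of_real (lam (Inl x) / 2) * (D x * D x) $$ (i,j))"
    unfolding D_def[symmetric] using i j DDdim by simp
  have Pent: "?P $$ (i,j) = (1/2) * (complex_of_real \<xi> * \<delta> - (\<Sum>x\<in>UNIV. complex_of_real (1 / lam (Inl x)) *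
      (\<Sum>y\<in>UNIV. \<Sum>y'\<in>UNIV. complex_of_real (\<Phi> x y * \<Phi> x y') * Q y y')))"
    unfolding \<delta>_def Q_def by (rule index_Pop[OF BC i j])
  have xi2: "(\<Sum>x\<in>UNIV. complex_of_real (lam (Inl x) / 2) * \<delta>) = complex_of_real \<xi> / 2 * \<delta>"
    unfolding xi by (simp add: sum_distrib_right sum_divide_distrib)
  have "(?S + ?P) $$ (i,j) = ?S $$ (i,j) + ?P $$ (i,j)" using i j by (simp add: Pop_def)
  also have "\<dots> = complex_of_real \<xi> * \<delta> - (\<Sum>x\<in>UNIV. \<Sum>y\<in>UNIV. complex_of_real (\<Phi> x y) * P x y)"
    unfolding Sent Pent DD sum.distrib sum_subtractf xi2 by (simp add: sum_distrib_left algebra_simps)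
  finally show "?L $$ (i,j) = (?S + ?P) $$ (i,j)" unfolding Lent by simp
qed

lemma sos_identity_lift:
  fixes \<Phi> :: "'x::finite \<Rightarrow> 'y::finite \<Rightarrow> real"
  assumes oA: "\<And>x. obs_mat dA (A x)" and oB: "\<And>y. obs_mat dB (B y)"
    and pos: "\<And>x. 0 < lam (Inl x)" and xi: "\<xi> = (\<Sum>x\<in>UNIV. lam (Inl x))"
  shows "complex_of_real \<xi> \<cdot>\<^sub>m 1\<^sub>m (dA * dB)
      - game_op \<Phi> (dA * dB) (\<lambda>x. lift_A dA dB (A x)) (\<lambda>y. lift_B dA dB (B y))
    = msum (dA * dB) UNIV (\<lambda>x. complex_of_real (lam (Inl x) / 2) \<cdot>\<^sub>m
        ((lift_A dA dB (A x) - msum (dA * dB) UNIV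
            (\<lambda>y. complex_of_real (\<Phi> x y / lam (Inl x)) \<cdot>\<^sub>m lift_B dA dB (B y)))
       * (lift_A dA dB (A x) - msum (dA * dB) UNIV
            (\<lambda>y. complex_of_real (\<Phi> x y / lam (Inl x)) \<cdot>\<^sub>m lift_B dA dB (B y)))))
      + Pop \<Phi> lam \<xi> (dA * dB) (\<lambda>y. lift_B dA dB (B y))"
proof -
  have cA: "A x \<in> carrier_mat dA dA" and cB: "B y \<in> carrier_mat dB dB" for x y
    using oA oB unfolding obs_mat_def herm_mat_def by blast+
  show ?thesis
    by (rule sos_identity[OF lift_A_carrier[OF cA] lift_B_carrier[OF cB] _ _ pos xi])
      (use obs_mat_lift_A[OF oA] lift_A_mult_lift_B[OF cA cB] in \<open>auto simp: obs_mat_def\<close>)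
qed

theorem mainTheorem1:
  fixes q :: "'x::finite \<times> 'y::finite \<Rightarrow> real"
    and f :: "'x \<Rightarrow> 'y \<Rightarrow> bool"
    and \<Phi> :: "'x \<Rightarrow> 'y \<Rightarrow> real"
    and lam :: "'x + 'y \<Rightarrow> real"
    and \<xi> :: real
  assumes "xor_distribution q"
    and "\<Phi> = game_matrix q f"
    and "\<xi> = xi_q \<Phi>"
    and "dual_optimal \<Phi> lam"
    and "\<forall>x. 0 < lam (Inl x)"
  shows "(\<forall>(dA::nat) (dB::nat) (A :: 'x \<Rightarrow> complex mat) (B :: 'y \<Rightarrow> complex mat).
            (\<forall>x. obs_mat dA (A x)) \<and> (\<forall>y. obs_mat dB (B y)) \<longrightarrow>
            of_real \<xi> \<cdot>\<^sub>m 1\<^sub>m (dA * dB)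
              - game_op \<Phi> (dA * dB) (\<lambda>x. lift_A dA dB (A x)) (\<lambda>y. lift_B dA dB (B y))
            = msum (dA * dB) UNIV (\<lambda>x. of_real (lam (Inl x) / 2) \<cdot>\<^sub>m
                  ((lift_A dA dB (A x) - msum (dA * dB) UNIV
                      (\<lambda>y. of_real (\<Phi> x y / lam (Inl x)) \<cdot>\<^sub>m lift_B dA dB (B y)))
                 * (lift_A dA dB (A x) - msum (dA * dB) UNIV
                      (\<lambda>y. of_real (\<Phi> x y / lam (Inl x)) \<cdot>\<^sub>m lift_B dA dB (B y)))))
              + Pop \<Phi> lam \<xi> (dA * dB) (\<lambda>y. lift_B dA dB (B y)))
       \<and> (\<forall>(n::nat) (B :: 'y \<Rightarrow> complex mat).
            (\<forall>y. obs_mat n (B y)) \<longrightarrow> psd_mat n (Pop \<Phi> lam \<xi> n B))"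
proof -
  have O: "dual_optimal \<Phi> lam" and pos: "\<And>x. 0 < lam (Inl x)" using assms(4,5) by auto
  then have F: "dual_feasible \<Phi> lam" unfolding dual_optimal_def by blast
  have "\<xi> = dual_obj lam" using assms(3) xi_q_eq_dual_obj[OF O] by simp
  with dual_optimal_balanced[OF O pos]
  have xiA: "\<xi> = (\<Sum>x\<in>UNIV. lam (Inl x))" and xiB: "\<xi> = (\<Sum>y\<in>UNIV. lam (Inr y))"
    unfolding dual_obj_split by simp_all
  show ?thesis
    using sos_identity_lift[OF _ _ pos xiA] Pop_psd[OF F pos xiB] by blast
qed

end
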